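(* Let $Y=HX+Z$ where $X\sim U(-a/2,a/2)$, $Z\sim N(0,\sigma^2)$, and $H\ge0$ are independent, and the density of $H$ is a regular fading distribution. Let $i(X;Y,H)=\ln\frac{f(Y\mid H,X)}{f(Y\mid H)}$. Then there is a constant $0<\alpha\le1$ such that, for large enough $a/\sigma$: (1) $I(X;Y,H)=E\{i(X;Y,H)\}=E\left\{\tfrac12\ln\!\left(\tfrac{a^2H^2}{2\pi e\sigma^2}\right)\right\}+O((\sigma/a)^\alpha)$; (2) $\mathrm{Var}(i(X;Y,H))=\tfrac12+\mathrm{Var}\!\left(\tfrac12\ln\!\left(\tfrac{H^2}{2\pi e\sigma^2}\right)\right)+O((\sigma/a)^{\alpha/2})$; (3) $\rho_3=E\{|i(X;Y,H)-I(X;Y,H)|^3\}<\infty$.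
   Context: A PDF $f$ on $[0,\infty)$ is a regular fading distribution if there exists $\alpha'>0$ with $f(h)\propto h^{\alpha'-1}$ for all sufficiently small $h>0$. The fading satisfies $E\{H^2\}=1$ (standing assumption). *)

theory Defs
  imports "HOL-Probability.Probability"
begin

definition is_pdf_nonneg :: "(real \<Rightarrow> real) \<Rightarrow> bool" where
  "is_pdf_nonneg f \<longleftrightarrow> f \<in> borel_measurable lborel \<and> (\<forall>h. 0 \<le> f h) \<and>
     (\<forall>h<0. f h = 0) \<and> (\<integral>\<^sup>+ h. ennreal (f h) \<partial>lborel) = 1"

definition regular_fading :: "(real \<Rightarrow> real) \<Rightarrow> bool" where
  "regular_fading f \<longleftrightarrow> is_pdf_nonneg f \<and>
     (\<exists>\<alpha>'>0. \<exists>c>0. \<exists>\<delta>>0. \<forall>h. 0 < h \<and> h < \<delta> \<longrightarrow> f h = c * h powr (\<alpha>' - 1))"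

definition law_X :: "real \<Rightarrow> real measure" where
  "law_X a = uniform_measure lborel {-a/2<..<a/2}"

definition law_Z :: "real \<Rightarrow> real measure" where
  "law_Z \<sigma> = density lborel (\<lambda>z. ennreal (normal_density 0 \<sigma> z))"

definition law_H :: "(real \<Rightarrow> real) \<Rightarrow> real measure" where
  "law_H f = density lborel (\<lambda>h. ennreal (f h))"

definition joint_law :: "real \<Rightarrow> real \<Rightarrow> (real \<Rightarrow> real) \<Rightarrow> (real \<times> real \<times> real) measure" where
  "joint_law a \<sigma> f = law_X a \<Otimes>\<^sub>M (law_Z \<sigma> \<Otimes>\<^sub>M law_H f)"

definition cond_dens :: "real \<Rightarrow> real \<Rightarrow> real \<Rightarrow> real \<Rightarrow> real" where
  "cond_dens \<sigma> h x y = normal_density (h * x) \<sigma> y"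

definition out_dens :: "real \<Rightarrow> real \<Rightarrow> real \<Rightarrow> real \<Rightarrow> real" where
  "out_dens a \<sigma> h y = (\<integral>x. cond_dens \<sigma> h x y \<partial>law_X a)"

definition info_dens :: "real \<Rightarrow> real \<Rightarrow> real \<Rightarrow> real \<Rightarrow> real \<Rightarrow> real" where
  "info_dens a \<sigma> x y h = ln (cond_dens \<sigma> h x y / out_dens a \<sigma> h y)"

definition info_rv :: "real \<Rightarrow> real \<Rightarrow> real \<times> real \<times> real \<Rightarrow> real" where
  "info_rv a \<sigma> \<omega> = (case \<omega> of (x, z, h) \<Rightarrow> info_dens a \<sigma> x (h * x + z) h)"

end

theory Submission
  imports Defs
begin

text \<open>
  For H, X in the support and Y = H X + Z one has, with t = (\<sigma>/a) powr (1/4),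
  i(X;Y,H) = T(H) + W(Z) + B, where T(h) = ln (a h / sqrt (2 pi e \<sigma>^2)),
  W(z) = 1/2 - z^2/(2\<sigma>^2) is centred with variance 1/2, and B = - ln P \<ge> 0, P being the
  probability that a fresh N(0,\<sigma>^2) perturbation of Y stays in the window H(-a/2,a/2).
  A Gaussian lower bound on P gives B \<le> 4 + Z^2/\<sigma>^2 + \<bar>ln H\<bar>, whose fourth moment is finite
  because the fading density behaves like h powr (\<alpha>'-1) near 0. Chebyshev gives B \<le> 2t^2
  unless \<bar>Z\<bar> > \<sigma>/t, H < t^2 or X lies within 2\<sigma>/t^3 of an edge, an event of
  probability O(t + t powr (2\<alpha>')). Splitting along this event makes E B^2 small, which gives
  the mean; the variance follows because T(H) and W(Z) are independent, and the third moment
  is dominated by the fourth moment of the bound on B.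
\<close>

lemma abs_2_mult_le_weighted_squares:
  fixes U V e :: real
  assumes e: "0 < e"
  shows "\<bar>2*U*V\<bar> \<le> e*U\<^sup>2 + V\<^sup>2/e"
proof -
  have "0 \<le> (e*\<bar>U\<bar> - \<bar>V\<bar>)\<^sup>2" by simp
  then have "2*e*(\<bar>U\<bar>*\<bar>V\<bar>) \<le> e\<^sup>2*U\<^sup>2 + V\<^sup>2"
    by (simp add: power2_eq_square algebra_simps abs_mult_self_eq)
  then have "2*(\<bar>U\<bar>*\<bar>V\<bar>) \<le> (e\<^sup>2*U\<^sup>2 + V\<^sup>2)/e" using e by (simp add: field_simps)
  also have "(e\<^sup>2*U\<^sup>2 + V\<^sup>2)/e = e*U\<^sup>2 + V\<^sup>2/e" using e by (simp add: field_simps power2_eq_square)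
  finally show ?thesis by (simp add: abs_mult)
qed

lemma power2_sum3_le: "(p + q + r)\<^sup>2 \<le> 3 * (p\<^sup>2 + q\<^sup>2 + (r::real)\<^sup>2)"
proof -
  have "0 \<le> (p - q)\<^sup>2 + (q - r)\<^sup>2 + (p - r)\<^sup>2" by simp
  then show ?thesis by (simp add: power2_eq_square algebra_simps)
qed

lemma power4_sum3_le: "(p + q + r)^4 \<le> 27 * (p^4 + q^4 + (r::real)^4)"
proof -
  have "(p + q + r)^4 = ((p + q + r)\<^sup>2)\<^sup>2" by simp
  also have "\<dots> \<le> (3 * (p\<^sup>2 + q\<^sup>2 + r\<^sup>2))\<^sup>2" by (intro power_mono power2_sum3_le) simp
  also have "\<dots> = 9 * (p\<^sup>2 + q\<^sup>2 + r\<^sup>2)\<^sup>2"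
    by (simp only: power_mult_distrib) simp
  also have "\<dots> \<le> 9 * (3 * ((p\<^sup>2)\<^sup>2 + (q\<^sup>2)\<^sup>2 + (r\<^sup>2)\<^sup>2))" by (intro mult_left_mono power2_sum3_le) simp
  finally show ?thesis by simp
qed

lemma power2_le_1_plus_power4: "(x::real)\<^sup>2 \<le> 1 + x^4"
proof -
  have "1 + x^4 - x\<^sup>2 = (x\<^sup>2 - 1/2)\<^sup>2 + 3/4" by (simp add: power2_eq_square algebra_simps eval_nat_numeral)
  moreover have "0 \<le> (x\<^sup>2 - 1/2)\<^sup>2" by simp
  ultimately show ?thesis by linarith
qed

lemma abs_le_1_plus_power4: "\<bar>x::real\<bar> \<le> 1 + x^4"
proof -
  have "\<bar>2*1*x\<bar> \<le> 1*1\<^sup>2 + x\<^sup>2/1" by (rule abs_2_mult_le_weighted_squares) simp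
  then have "2 * \<bar>x\<bar> \<le> 1 + x\<^sup>2" by (simp add: abs_mult)
  moreover have "0 \<le> x^4" by (simp add: zero_le_even_power)
  ultimately show ?thesis using power2_le_1_plus_power4[of x] by linarith
qed

lemma ln_power4_le_square:
  fixes h :: real
  assumes "1 \<le> h"
  shows "(ln h)^4 \<le> 16 * h\<^sup>2"
proof -
  have "ln h = 2 * ln (sqrt h)" using assms by (simp add: ln_sqrt)
  also have "\<dots> \<le> 2 * sqrt h" using ln_le_minus_one[of "sqrt h"] assms by simp
  finally have "(ln h)^4 \<le> (2 * sqrt h)^4" using assms by (intro power_mono) auto
  also have "(2 * sqrt h)^4 = 16 * ((sqrt h)\<^sup>2)\<^sup>2" by (simp add: power_mult_distrib flip: power_mult)
  finally show ?thesis using assms by simp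
qed

lemma ln_power4_le_powr:
  fixes h \<gamma> :: real
  assumes h: "0 < h" "h < 1" and \<gamma>: "0 < \<gamma>"
  shows "(ln h)^4 \<le> h powr (-4*\<gamma>) / \<gamma>^4"
proof -
  have "ln (h powr (-\<gamma>)) \<le> h powr (-\<gamma>) - 1" by (rule ln_le_minus_one) (use h in simp)
  then have "- ln h \<le> h powr (-\<gamma>) / \<gamma>" using h \<gamma> by (simp add: ln_powr field_simps)
  then have "(- ln h)^4 \<le> (h powr (-\<gamma>) / \<gamma>)^4" using h by (intro power_mono) auto
  also have "(h powr (-\<gamma>) / \<gamma>)^4 = h powr (-4*\<gamma>) / \<gamma>^4"
    using powr_power[of h "-\<gamma>" 4] h by (simp add: power_divide)
  finally show ?thesis by simp
qed

text \<open>On the event S \<ge> 1 it suffices that B^2 \<le> D^2 \<le> l D^4/2 + 1/(2l).\<close>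
lemma square_le_split_bound:
  fixes B D S l t :: real
  assumes "0 \<le> B" "B \<le> D" "0 \<le> S" "0 < l" "S < 1 \<Longrightarrow> B \<le> 2*t\<^sup>2"
  shows "B\<^sup>2 \<le> 4*t^4 + l * D^4 / 2 + S / (2*l)"
proof (cases "S < 1")
  case True
  then have "B\<^sup>2 \<le> (2*t\<^sup>2)\<^sup>2" using assms by (intro power_mono) auto
  moreover have "0 \<le> l * D^4 / 2 + S / (2*l)" using assms by auto
  ultimately show ?thesis by (simp add: power_mult_distrib)
next
  case False
  have "B\<^sup>2 \<le> D\<^sup>2" using assms by (intro power_mono) auto
  moreover have "\<bar>2*D\<^sup>2*1\<bar> \<le> l*(D\<^sup>2)\<^sup>2 + 1\<^sup>2/l" using assms(4) by (rule abs_2_mult_le_weighted_squares)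
  moreover have "1 / (2*l) \<le> S / (2*l)" using False assms(4) by (intro divide_right_mono) auto
  moreover have "0 \<le> 4*t^4" by simp
  ultimately show ?thesis by (simp add: power2_eq_square power4_eq_xxxx field_simps)
qed

lemma powr_le_rate_power4:
  fixes t g p :: real
  assumes "0 < t" "t \<le> 1" "0 < g" "g \<le> p"
  shows "t powr p \<le> (t powr (g/4))^4"
proof -
  have "(t powr (g/4))^4 = t powr (of_nat 4 * (g/4))" using assms by (intro powr_power) simp
  then show ?thesis using powr_mono'[of g p t] assms by simp
qed

lemma
  fixes F :: "'a \<Rightarrow> real"
  assumes "prob_space M2" "integrable M1 F"
  shows integrable_pair_fst: "integrable (M1 \<Otimes>\<^sub>M M2) (\<lambda>\<omega>. F (fst \<omega>))"
    and integral_pair_fst: "(\<integral>\<omega>. F (fst \<omega>) \<partial>(M1 \<Otimes>\<^sub>M M2)) = integral\<^sup>L M1 F"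
proof -
  interpret prob_space M2 by fact
  have [measurable]: "F \<in> borel_measurable M1" using assms(2) by auto
  have d: "distr (M1 \<Otimes>\<^sub>M M2) M1 fst = M1" by (rule distr_pair_fst)
  show "integrable (M1 \<Otimes>\<^sub>M M2) (\<lambda>\<omega>. F (fst \<omega>))"
    using integrable_distr_eq[of fst "M1 \<Otimes>\<^sub>M M2" M1 F] d assms(2) by simp
  show "(\<integral>\<omega>. F (fst \<omega>) \<partial>(M1 \<Otimes>\<^sub>M M2)) = integral\<^sup>L M1 F"
    using integral_distr[of fst "M1 \<Otimes>\<^sub>M M2" M1 F] d by simp
qed

lemma
  fixes G :: "'b \<Rightarrow> real"
  assumes "prob_space M1" "sigma_finite_measure M2" "integrable M2 G"
  shows integrable_pair_snd: "integrable (M1 \<Otimes>\<^sub>M M2) (\<lambda>\<omega>. G (snd \<omega>))"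
    and integral_pair_snd: "(\<integral>\<omega>. G (snd \<omega>) \<partial>(M1 \<Otimes>\<^sub>M M2)) = integral\<^sup>L M2 G"
proof -
  interpret p1: prob_space M1 by fact
  interpret p2: sigma_finite_measure M2 by fact
  interpret pair_sigma_finite M1 M2 ..
  have [measurable]: "G \<in> borel_measurable M2" using assms(3) by auto
  have swap: "(\<lambda>(x, y). G (snd (y, x))) = (\<lambda>\<omega>. G (fst \<omega>))" by auto
  show "integrable (M1 \<Otimes>\<^sub>M M2) (\<lambda>\<omega>. G (snd \<omega>))"
    using integrable_product_swap_iff[of "\<lambda>\<omega>. G (snd \<omega>)"] integrable_pair_fst[OF assms(1,3)]
    unfolding swap by simp
  show "(\<integral>\<omega>. G (snd \<omega>) \<partial>(M1 \<Otimes>\<^sub>M M2)) = integral\<^sup>L M2 G"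
    using integral_product_swap[of "\<lambda>\<omega>. G (snd \<omega>)"] integral_pair_fst[OF assms(1,3)]
    unfolding swap by simp
qed

lemma distr_pair_snd:
  assumes "prob_space M1" "sigma_finite_measure M2"
  shows "distr (M1 \<Otimes>\<^sub>M M2) M2 snd = M2"
proof (intro measure_eqI)
  interpret p1: prob_space M1 by fact
  interpret p2: sigma_finite_measure M2 by fact
  fix A assume A: "A \<in> sets (distr (M1 \<Otimes>\<^sub>M M2) M2 snd)"
  then have "emeasure (distr (M1 \<Otimes>\<^sub>M M2) M2 snd) A = emeasure (M1 \<Otimes>\<^sub>M M2) (space M1 \<times> A)"
    by (auto simp: emeasure_distr space_pair_measure dest: sets.sets_into_space
        intro!: arg_cong2[where f=emeasure])
  with A show "emeasure (distr (M1 \<Otimes>\<^sub>M M2) M2 snd) A = emeasure M2 A"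
    by (simp add: p2.emeasure_pair_measure_Times p1.emeasure_space_1)
qed simp

lemma AE_pair_fst:
  assumes "prob_space M2" "AE x in M1. P x"
  shows "AE \<omega> in M1 \<Otimes>\<^sub>M M2. P (fst \<omega>)"
proof -
  interpret prob_space M2 by fact
  have "AE x in distr (M1 \<Otimes>\<^sub>M M2) M1 fst. P x" by (subst distr_pair_fst) (rule assms(2))
  then show ?thesis by (rule AE_distrD[OF measurable_fst])
qed

lemma AE_pair_snd:
  assumes "prob_space M1" "sigma_finite_measure M2" "AE y in M2. P y"
  shows "AE \<omega> in M1 \<Otimes>\<^sub>M M2. P (snd \<omega>)"
proof -
  have "AE y in distr (M1 \<Otimes>\<^sub>M M2) M2 snd. P y" by (subst distr_pair_snd[OF assms(1,2)]) (rule assms(3))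
  then show ?thesis by (rule AE_distrD[OF measurable_snd])
qed

lemma
  fixes F :: "'a \<Rightarrow> real" and G :: "'b \<Rightarrow> real"
  assumes "prob_space M1" "prob_space M2"
    and "integrable M1 (\<lambda>x. (F x)\<^sup>2)" "integrable M2 (\<lambda>y. (G y)\<^sup>2)"
    and [measurable]: "F \<in> borel_measurable M1" "G \<in> borel_measurable M2"
    and "integral\<^sup>L M2 G = 0"
  shows integrable_pair_mult: "integrable (M1 \<Otimes>\<^sub>M M2) (\<lambda>\<omega>. F (fst \<omega>) * G (snd \<omega>))"
    and integral_pair_mult_centered: "(\<integral>\<omega>. F (fst \<omega>) * G (snd \<omega>) \<partial>(M1 \<Otimes>\<^sub>M M2)) = 0"
proof -
  interpret p1: prob_space M1 by fact
  interpret p2: prob_space M2 by fact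
  interpret pair_sigma_finite M1 M2 ..
  have "integrable (M1 \<Otimes>\<^sub>M M2) (\<lambda>\<omega>. (F (fst \<omega>))\<^sup>2 + (G (snd \<omega>))\<^sup>2)"
    using integrable_pair_fst[OF assms(2,3)] integrable_pair_snd[OF assms(1) _ assms(4)]
    by (simp add: p2.sigma_finite_measure_axioms)
  then show I: "integrable (M1 \<Otimes>\<^sub>M M2) (\<lambda>\<omega>. F (fst \<omega>) * G (snd \<omega>))"
  proof (rule Bochner_Integration.integrable_bound)
    show "AE \<omega> in M1 \<Otimes>\<^sub>M M2. norm (F (fst \<omega>) * G (snd \<omega>)) \<le> norm ((F (fst \<omega>))\<^sup>2 + (G (snd \<omega>))\<^sup>2)"
    proof (rule AE_I2)
      fix \<omega>
      have "2 * (\<bar>F (fst \<omega>)\<bar> * \<bar>G (snd \<omega>)\<bar>) \<le> (F (fst \<omega>))\<^sup>2 + (G (snd \<omega>))\<^sup>2"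
        using abs_2_mult_le_weighted_squares[of 1 "F (fst \<omega>)" "G (snd \<omega>)"] by (simp add: abs_mult)
      moreover have "0 \<le> \<bar>F (fst \<omega>)\<bar> * \<bar>G (snd \<omega>)\<bar>" by simp
      ultimately show "norm (F (fst \<omega>) * G (snd \<omega>)) \<le> norm ((F (fst \<omega>))\<^sup>2 + (G (snd \<omega>))\<^sup>2)"
        unfolding real_norm_def abs_mult by linarith
    qed
  qed simp
  have "(\<integral>\<omega>. F (fst \<omega>) * G (snd \<omega>) \<partial>(M1 \<Otimes>\<^sub>M M2)) = (\<integral>x. (\<integral>y. F x * G y \<partial>M2) \<partial>M1)"
    using integral_fst'[OF I] by simp
  also have "\<dots> = 0" using assms(7) by simp
  finally show "(\<integral>\<omega>. F (fst \<omega>) * G (snd \<omega>) \<partial>(M1 \<Otimes>\<^sub>M M2)) = 0" .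
qed

lemma square_integral_perturbation:
  fixes U V X :: "'a \<Rightarrow> real"
  assumes U2: "integrable M (\<lambda>x. (U x)\<^sup>2)" and V2: "integrable M (\<lambda>x. (V x)\<^sup>2)"
    and [measurable]: "U \<in> borel_measurable M" "V \<in> borel_measurable M" "X \<in> borel_measurable M"
    and X: "AE x in M. X x = U x + V x" and e: "0 < e"
  shows "integrable M (\<lambda>x. (X x)\<^sup>2)"
    and "\<bar>(\<integral>x. (X x)\<^sup>2 \<partial>M) - (\<integral>x. (U x)\<^sup>2 \<partial>M)\<bar>
           \<le> e * (\<integral>x. (U x)\<^sup>2 \<partial>M) + (1 + 1/e) * (\<integral>x. (V x)\<^sup>2 \<partial>M)"
proof -
  have UV: "integrable M (\<lambda>x. 2 * U x * V x)"
  proof (rule Bochner_Integration.integrable_bound)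
    show "integrable M (\<lambda>x. (U x)\<^sup>2 + (V x)\<^sup>2)" using U2 V2 by simp
    show "AE x in M. norm (2 * U x * V x) \<le> norm ((U x)\<^sup>2 + (V x)\<^sup>2)"
      using abs_2_mult_le_weighted_squares[of 1 "U x" "V x" for x] by auto
  qed simp
  have X2: "AE x in M. (X x)\<^sup>2 = (U x)\<^sup>2 + 2 * U x * V x + (V x)\<^sup>2"
    using X by eventually_elim (simp add: power2_eq_square algebra_simps)
  have S: "integrable M (\<lambda>x. (U x)\<^sup>2 + 2 * U x * V x + (V x)\<^sup>2)" using U2 UV V2 by simp
  show "integrable M (\<lambda>x. (X x)\<^sup>2)"
    by (rule integrable_cong_AE_imp[OF S]) (use X2 in \<open>auto elim: AE_mp\<close>)
  have "(\<integral>x. (X x)\<^sup>2 \<partial>M) = (\<integral>x. (U x)\<^sup>2 + 2 * U x * V x + (V x)\<^sup>2 \<partial>M)"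
    by (rule integral_cong_AE) (use X2 in auto)
  also have "\<dots> = (\<integral>x. (U x)\<^sup>2 \<partial>M) + (\<integral>x. 2 * U x * V x \<partial>M) + (\<integral>x. (V x)\<^sup>2 \<partial>M)"
    using U2 UV V2 by simp
  finally have split: "(\<integral>x. (X x)\<^sup>2 \<partial>M) - (\<integral>x. (U x)\<^sup>2 \<partial>M)
      = (\<integral>x. 2 * U x * V x \<partial>M) + (\<integral>x. (V x)\<^sup>2 \<partial>M)" by simp
  have "\<bar>\<integral>x. 2 * U x * V x \<partial>M\<bar> \<le> (\<integral>x. \<bar>2 * U x * V x\<bar> \<partial>M)" by (rule integral_abs_bound)
  also have "\<dots> \<le> (\<integral>x. e * (U x)\<^sup>2 + (V x)\<^sup>2 / e \<partial>M)"
    using UV U2 V2 abs_2_mult_le_weighted_squares[OF e] by (intro integral_mono) auto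
  also have "\<dots> = e * (\<integral>x. (U x)\<^sup>2 \<partial>M) + (\<integral>x. (V x)\<^sup>2 \<partial>M) / e" using U2 V2 by simp
  finally have "\<bar>\<integral>x. 2 * U x * V x \<partial>M\<bar> \<le> e * (\<integral>x. (U x)\<^sup>2 \<partial>M) + (\<integral>x. (V x)\<^sup>2 \<partial>M) / e" .
  moreover have "0 \<le> (\<integral>x. (V x)\<^sup>2 \<partial>M)" by simp
  moreover have "(1 + 1/e) * (\<integral>x. (V x)\<^sup>2 \<partial>M) = (\<integral>x. (V x)\<^sup>2 \<partial>M) + (\<integral>x. (V x)\<^sup>2 \<partial>M) / e"
    by (simp add: distrib_right)
  ultimately show "\<bar>(\<integral>x. (X x)\<^sup>2 \<partial>M) - (\<integral>x. (U x)\<^sup>2 \<partial>M)\<bar>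
      \<le> e * (\<integral>x. (U x)\<^sup>2 \<partial>M) + (1 + 1/e) * (\<integral>x. (V x)\<^sup>2 \<partial>M)"
    unfolding split by linarith
qed

lemma normal_density_antimono:
  assumes "0 < s" "\<bar>u\<bar> \<le> v"
  shows "normal_density 0 s v \<le> normal_density 0 s u"
proof -
  have "\<bar>u\<bar>^2 \<le> v^2" by (rule power_mono[OF assms(2) abs_ge_zero])
  then have "- (v - 0)\<^sup>2 / (2 * s\<^sup>2) \<le> - (u - 0)\<^sup>2 / (2 * s\<^sup>2)"
    by (intro divide_right_mono) auto
  then show ?thesis unfolding normal_density_def by (intro mult_left_mono) auto
qed

lemma ln_normal_density:
  assumes "0 < \<sigma>"
  shows "ln (normal_density 0 \<sigma> z) = - ln (2*pi*\<sigma>\<^sup>2)/2 - z\<^sup>2/(2*\<sigma>\<^sup>2)"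
proof -
  have p: "0 < 2*pi*\<sigma>\<^sup>2" using assms by auto
  have "ln (normal_density 0 \<sigma> z) = ln (1 / sqrt (2 * pi * \<sigma>\<^sup>2)) + ln (exp (- (z - 0)\<^sup>2 / (2 * \<sigma>\<^sup>2)))"
    unfolding normal_density_def using p by (intro ln_mult_pos) auto
  also have "ln (1 / sqrt (2 * pi * \<sigma>\<^sup>2)) = - ln (2*pi*\<sigma>\<^sup>2)/2"
    using p by (simp add: ln_divide_pos ln_sqrt)
  finally show ?thesis by simp
qed

lemma
  assumes "0 < \<sigma>"
  shows integrable_normal_second_moment: "integrable lborel (\<lambda>u. normal_density 0 \<sigma> u * u\<^sup>2)"
    and integral_normal_second_moment: "(\<integral>u. normal_density 0 \<sigma> u * u\<^sup>2 \<partial>lborel) = \<sigma>\<^sup>2"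
  using integrable_normal_moment[OF assms, where \<mu>=0 and k=2]
    integral_normal_moment_even[OF assms, where \<mu>=0 and k=1] assms
  by simp_all

lemma prob_space_law_X: "0 < a \<Longrightarrow> prob_space (law_X a)"
  unfolding law_X_def by (rule prob_space_uniform_measure) auto

lemma prob_space_law_Z: "0 < \<sigma> \<Longrightarrow> prob_space (law_Z \<sigma>)"
  unfolding law_Z_def using prob_space_normal_density by auto

lemma prob_space_law_H: "is_pdf_nonneg f \<Longrightarrow> prob_space (law_H f)"
  unfolding law_H_def is_pdf_nonneg_def by (intro prob_spaceI) (auto simp: emeasure_density)

lemma prob_space_joint_law:
  "0 < a \<Longrightarrow> 0 < \<sigma> \<Longrightarrow> is_pdf_nonneg f \<Longrightarrow> prob_space (joint_law a \<sigma> f)"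
  unfolding joint_law_def
  by (intro prob_space_pair prob_space_law_X prob_space_law_Z prob_space_law_H)

lemma sets_law_X[measurable_cong]: "sets (law_X a) = sets borel"
  by (simp add: law_X_def)

lemma sets_law_Z[measurable_cong]: "sets (law_Z \<sigma>) = sets borel"
  by (simp add: law_Z_def)

lemma sets_law_H[measurable_cong]: "sets (law_H f) = sets borel"
  by (simp add: law_H_def)

lemma sets_joint_law[measurable_cong]:
  "sets (joint_law a \<sigma> f) = sets (borel \<Otimes>\<^sub>M (borel \<Otimes>\<^sub>M borel))"
  unfolding joint_law_def by (intro sets_pair_measure_cong sets_law_X sets_law_Z sets_law_H)

lemma law_X_density:
  assumes a: "0 < a"
  shows "law_X a = density lborel (\<lambda>x. ennreal (indicator {-a/2<..<a/2} x / a))"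
proof -
  have e: "1 / ennreal a = ennreal (1/a)" using divide_ennreal[of 1 a] a by simp
  have m: "emeasure lborel {-a/2<..<a/2} = ennreal a"
    using a emeasure_lborel_Ioo[of "-(a/2)" "a/2"] by simp
  show ?thesis unfolding law_X_def uniform_measure_def m using a
    by (intro density_cong) (auto simp: indicator_def e)
qed

lemma integral_law_X:
  assumes "0 < a" "F \<in> borel_measurable borel"
  shows "integral\<^sup>L (law_X a) F = (\<integral>x. indicator {-a/2<..<a/2} x / a * F x \<partial>lborel)"
  unfolding law_X_density[OF assms(1)] using assms
  by (subst integral_density) (auto simp: indicator_def)

lemma integrable_law_H_iff:
  assumes "is_pdf_nonneg f" "F \<in> borel_measurable borel"
  shows "integrable (law_H f) F \<longleftrightarrow> integrable lborel (\<lambda>h. f h * F h)"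
  unfolding law_H_def using assms by (subst integrable_density) (auto simp: is_pdf_nonneg_def)

lemma integral_law_H:
  assumes "is_pdf_nonneg f" "F \<in> borel_measurable borel"
  shows "integral\<^sup>L (law_H f) F = (\<integral>h. f h * F h \<partial>lborel)"
  unfolding law_H_def using assms by (subst integral_density) (auto simp: is_pdf_nonneg_def)

lemma AE_law_H_pos:
  assumes "is_pdf_nonneg f"
  shows "AE h in law_H f. 0 < h"
proof -
  have [measurable]: "f \<in> borel_measurable borel" using assms by (simp add: is_pdf_nonneg_def)
  have "AE h in lborel. h \<noteq> 0" by (rule AE_lborel_singleton)
  then have "AE h in lborel. 0 < f h \<longrightarrow> 0 < h"
    by eventually_elim (use assms in \<open>auto simp: is_pdf_nonneg_def not_less_iff_gr_or_eq\<close>)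
  then show ?thesis unfolding law_H_def by (subst AE_density) auto
qed

lemma AE_joint_law_support:
  assumes a: "0 < a" and s: "0 < \<sigma>" and pdf: "is_pdf_nonneg f"
  shows "AE \<omega> in joint_law a \<sigma> f. -a/2 < fst \<omega> \<and> fst \<omega> < a/2 \<and> 0 < snd (snd \<omega>)"
proof -
  have ZH: "prob_space (law_Z \<sigma> \<Otimes>\<^sub>M law_H f)"
    by (intro prob_space_pair prob_space_law_Z[OF s] prob_space_law_H[OF pdf])
  have "AE x in law_X a. -a/2 < x \<and> x < a/2"
    unfolding law_X_def by (rule AE_uniform_measureI) auto
  then have X: "AE \<omega> in joint_law a \<sigma> f. -a/2 < fst \<omega> \<and> fst \<omega> < a/2"
    unfolding joint_law_def by (rule AE_pair_fst[OF ZH])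
  have sf: "sigma_finite_measure (law_Z \<sigma> \<Otimes>\<^sub>M law_H f)"
    using ZH by (simp add: prob_space_imp_sigma_finite)
  have "AE \<omega> in law_Z \<sigma> \<Otimes>\<^sub>M law_H f. 0 < snd \<omega>"
    using AE_pair_snd[OF prob_space_law_Z[OF s] _ AE_law_H_pos[OF pdf]] prob_space_law_H[OF pdf]
    by (simp add: prob_space_imp_sigma_finite)
  then have H: "AE \<omega> in joint_law a \<sigma> f. 0 < snd (snd \<omega>)"
    unfolding joint_law_def by (rule AE_pair_snd[OF prob_space_law_X[OF a] sf])
  from X H show ?thesis by eventually_elim auto
qed

lemma measurable_info_rv[measurable]:
  assumes "0 < a"
  shows "info_rv a \<sigma> \<in> borel_measurable (joint_law a \<sigma> f)"
proof -
  interpret prob_space "law_X a" using prob_space_law_X[OF assms] .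
  have "(\<lambda>(p, x). normal_density (fst p * x) \<sigma> (snd p)) \<in> borel_measurable ((borel \<Otimes>\<^sub>M borel) \<Otimes>\<^sub>M law_X a)"
    unfolding normal_density_def by measurable
  from borel_measurable_lebesgue_integral[OF this]
  have [measurable]: "(\<lambda>p. out_dens a \<sigma> (fst p) (snd p)) \<in> borel_measurable (borel \<Otimes>\<^sub>M borel)"
    unfolding out_dens_def cond_dens_def by simp
  have eq: "info_rv a \<sigma> = (\<lambda>\<omega>. ln (normal_density (snd (snd \<omega>) * fst \<omega>) \<sigma> (snd (snd \<omega>) * fst \<omega> + fst (snd \<omega>)) /
        (\<lambda>p. out_dens a \<sigma> (fst p) (snd p)) (snd (snd \<omega>), snd (snd \<omega>) * fst \<omega> + fst (snd \<omega>))))"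
    by (auto simp: info_rv_def info_dens_def cond_dens_def fun_eq_iff split: prod.splits)
  show ?thesis unfolding eq joint_law_def normal_density_def by measurable
qed

text \<open>The probability that a fresh N(0,\<sigma>^2) sample U keeps (y - U)/h inside the input window;
  it is a h times the output density f(y | h).\<close>
definition window_prob :: "real \<Rightarrow> real \<Rightarrow> real \<Rightarrow> real \<Rightarrow> real" where
  "window_prob a \<sigma> h y = (\<integral>u. indicator {-a/2<..<a/2} ((y-u)/h) * normal_density 0 \<sigma> u \<partial>lborel)"

lemma integrable_window_integrand:
  "0 < \<sigma> \<Longrightarrow> integrable lborel (\<lambda>u. indicator {-a/2<..<a/2} ((y-u)/h) * normal_density 0 \<sigma> u)"
  by (rule Bochner_Integration.integrable_bound[of _ "normal_density 0 \<sigma>"])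
    (auto simp: indicator_def)

lemma window_prob_le_1:
  assumes "0 < \<sigma>"
  shows "window_prob a \<sigma> h y \<le> 1"
proof -
  have "window_prob a \<sigma> h y \<le> (\<integral>u. normal_density 0 \<sigma> u \<partial>lborel)"
    unfolding window_prob_def using assms
    by (intro integral_mono integrable_window_integrand) (auto simp: indicator_def)
  then show ?thesis using assms by simp
qed

lemma out_dens_eq_window_prob:
  assumes a: "0 < a" and h: "0 < h"
  shows "out_dens a \<sigma> h y = window_prob a \<sigma> h y / (a * h)"
proof -
  define F where "F = (\<lambda>u. indicator {-a/2<..<a/2} ((y-u)/h) * normal_density 0 \<sigma> u)"
  have "out_dens a \<sigma> h y = (\<integral>x. indicator {-a/2<..<a/2} x / a * normal_density (h*x) \<sigma> y \<partial>lborel)"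
    unfolding out_dens_def cond_dens_def
    by (rule integral_law_X[OF a]) (simp add: normal_density_def)
  also have "\<dots> = (\<integral>x. F (y + (-h) * x) / a \<partial>lborel)"
  proof (rule Bochner_Integration.integral_cong[OF refl])
    fix x
    have "(y - (y + (-h) * x))/h = x" using h by simp
    then show "indicator {-a/2<..<a/2} x / a * normal_density (h*x) \<sigma> y = F (y + (-h) * x) / a"
      unfolding F_def by (simp add: normal_density_def)
  qed
  also have "\<dots> = (\<integral>x. F (y + (-h) * x) \<partial>lborel) / a"
    by (rule integral_divide_zero)
  also have "(\<integral>x. F (y + (-h) * x) \<partial>lborel) = (\<integral>u. F u \<partial>lborel) / h"
    using lborel_integral_real_affine[of "-h" F y] h by simp
  finally show ?thesis using a h by (simp add: F_def window_prob_def)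
qed

lemma window_prob_ge_Chebyshev:
  assumes s: "0 < \<sigma>" and m: "0 < m"
    and inside: "\<And>u. \<bar>u\<bar> \<le> m \<Longrightarrow> -a/2 < (y-u)/h \<and> (y-u)/h < a/2"
  shows "1 - \<sigma>\<^sup>2/m\<^sup>2 \<le> window_prob a \<sigma> h y"
proof -
  have i1: "integrable lborel (\<lambda>u. indicator {-m..m} u * normal_density 0 \<sigma> u)"
    by (rule Bochner_Integration.integrable_bound[of _ "normal_density 0 \<sigma>"])
      (auto simp: indicator_def s)
  have i2: "integrable lborel (\<lambda>u. normal_density 0 \<sigma> u * u\<^sup>2 / m\<^sup>2)"
    using integrable_normal_second_moment[OF s] by simp
  have "1 = (\<integral>u. normal_density 0 \<sigma> u \<partial>lborel)" using s by simp
  also have "\<dots> \<le> (\<integral>u. indicator {-m..m} u * normal_density 0 \<sigma> u + normal_density 0 \<sigma> u * u\<^sup>2 / m\<^sup>2 \<partial>lborel)"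
  proof (rule integral_mono)
    show "integrable lborel (\<lambda>u. indicator {-m..m} u * normal_density 0 \<sigma> u + normal_density 0 \<sigma> u * u\<^sup>2 / m\<^sup>2)"
      using i1 i2 by simp
    fix u
    show "normal_density 0 \<sigma> u \<le> indicator {-m..m} u * normal_density 0 \<sigma> u + normal_density 0 \<sigma> u * u\<^sup>2 / m\<^sup>2"
    proof (cases "\<bar>u\<bar> \<le> m")
      case True
      then show ?thesis by (simp add: indicator_def abs_le_iff)
    next
      case False
      then have "m\<^sup>2 \<le> u\<^sup>2" using m by (metis abs_le_square_iff abs_of_pos less_imp_le not_le)
      then have "normal_density 0 \<sigma> u * 1 \<le> normal_density 0 \<sigma> u * (u\<^sup>2 / m\<^sup>2)"
        using m by (intro mult_left_mono) auto
      then show ?thesis using False by (simp add: indicator_def)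
    qed
  qed (simp add: s)
  also have "\<dots> = (\<integral>u. indicator {-m..m} u * normal_density 0 \<sigma> u \<partial>lborel) + \<sigma>\<^sup>2/m\<^sup>2"
    using i1 i2 integral_normal_second_moment[OF s] by simp
  also have "(\<integral>u. indicator {-m..m} u * normal_density 0 \<sigma> u \<partial>lborel) \<le> window_prob a \<sigma> h y"
    unfolding window_prob_def
    using inside by (intro integral_mono[OF i1 integrable_window_integrand[OF s]])
      (auto simp: indicator_def abs_le_iff)
  finally show ?thesis by simp
qed

text \<open>An interval of length min (h a/2) \<sigma> next to z, on the side towards the centre of the window,
  keeps (h x0 + z - u)/h in the window, and on it the Gaussian density is at least its value
  at \<bar>z\<bar> + \<sigma>.\<close>
lemma window_prob_ge_Gaussian:
  assumes a: "0 < a" and h: "0 < h" and s: "0 < \<sigma>" and x0: "-a/2 < x0" "x0 < a/2"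
  shows "min (h*a/2) \<sigma> * normal_density 0 \<sigma> (\<bar>z\<bar> + \<sigma>) \<le> window_prob a \<sigma> h (h*x0 + z)"
proof -
  define L where "L = min (h*a/2) \<sigma>"
  define J where "J = (if 0 \<le> x0 then {z<..<z+L} else {z-L<..<z})"
  have L: "0 < L" "L \<le> \<sigma>" "L / h \<le> a/2" using a h s by (auto simp: L_def min_def field_simps)
  have "integrable lborel (indicator J :: real \<Rightarrow> real)"
    unfolding J_def using L by (auto intro!: integrable_real_indicator simp: emeasure_lborel_Ioo)
  then have iJ: "integrable lborel (\<lambda>u. indicator J u * normal_density 0 \<sigma> (\<bar>z\<bar> + \<sigma>))"
    by simp
  have "min (h*a/2) \<sigma> * normal_density 0 \<sigma> (\<bar>z\<bar> + \<sigma>)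
      = (\<integral>u. indicator J u * normal_density 0 \<sigma> (\<bar>z\<bar> + \<sigma>) \<partial>lborel)"
    using L by (simp add: L_def J_def)
  also have "\<dots> \<le> window_prob a \<sigma> h (h*x0 + z)"
    unfolding window_prob_def
  proof (rule integral_mono[OF iJ integrable_window_integrand[OF s]])
    fix u
    show "indicator J u * normal_density 0 \<sigma> (\<bar>z\<bar> + \<sigma>)
        \<le> indicator {-a/2<..<a/2} ((h*x0 + z - u)/h) * normal_density 0 \<sigma> u"
    proof (cases "u \<in> J")
      case True
      have e: "(h*x0 + z - u)/h = x0 - (u - z)/h" using h by (simp add: field_simps)
      have "\<bar>u\<bar> \<le> \<bar>z\<bar> + \<sigma>" using True L by (auto simp: J_def split: if_splits)
      then have nd: "normal_density 0 \<sigma> (\<bar>z\<bar> + \<sigma>) \<le> normal_density 0 \<sigma> u"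
        by (rule normal_density_antimono[OF s])
      have "-a/2 < (h*x0 + z - u)/h \<and> (h*x0 + z - u)/h < a/2"
      proof (cases "0 \<le> x0")
        case True
        with \<open>u \<in> J\<close> have u: "z < u" "u < z + L" by (auto simp: J_def)
        have "0 < (u - z)/h" using u h by simp
        moreover have "(u - z)/h < L/h" using u h by (simp add: divide_strict_right_mono)
        ultimately show ?thesis unfolding e using L x0 True by linarith
      next
        case False
        with \<open>u \<in> J\<close> have u: "z - L < u" "u < z" by (auto simp: J_def)
        have "(u - z)/h < 0" using u h by (simp add: divide_neg_pos)
        moreover have "-(L/h) < (u - z)/h" using divide_strict_right_mono[of "-L" "u-z" h] u h by simp
        ultimately show ?thesis unfolding e using L x0 False by linarith
      qed
      then show ?thesis using True nd by (simp add: indicator_def)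
    qed simp
  qed
  finally show ?thesis .
qed

lemma window_prob_pos:
  assumes "0 < a" "0 < h" "0 < \<sigma>" "-a/2 < x" "x < a/2"
  shows "0 < window_prob a \<sigma> h (h*x + z)"
proof -
  have "0 < min (h*a/2) \<sigma> * normal_density 0 \<sigma> (\<bar>z\<bar> + \<sigma>)"
    using assms normal_density_pos[of \<sigma>] by auto
  then show ?thesis using window_prob_ge_Gaussian[OF assms, of z] by linarith
qed

definition high_snr_term :: "real \<Rightarrow> real \<Rightarrow> real \<Rightarrow> real" where
  "high_snr_term a \<sigma> h = ln (a\<^sup>2 * h\<^sup>2 / (2 * pi * exp 1 * \<sigma>\<^sup>2)) / 2"

definition noise_term :: "real \<Rightarrow> real \<Rightarrow> real" where
  "noise_term \<sigma> z = 1/2 - z\<^sup>2 / (2 * \<sigma>\<^sup>2)"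

lemma high_snr_term_eq:
  assumes "0 < a" "0 < h" "0 < \<sigma>"
  shows "high_snr_term a \<sigma> h = ln a + ln h - ln (2*pi*\<sigma>\<^sup>2)/2 - 1/2"
proof -
  have p: "0 < a*h" "0 < 2*pi*\<sigma>\<^sup>2" using assms by auto
  have "a\<^sup>2 * h\<^sup>2 / (2 * pi * exp 1 * \<sigma>\<^sup>2) = (a*h)^2 / ((2*pi*\<sigma>\<^sup>2) * exp 1)"
    by (simp add: power_mult_distrib mult_ac)
  also have "ln \<dots> = ln ((a*h)^2) - ln ((2*pi*\<sigma>\<^sup>2) * exp 1)"
    using p by (intro ln_divide_pos) auto
  also have "ln ((2*pi*\<sigma>\<^sup>2) * exp 1) = ln (2*pi*\<sigma>\<^sup>2) + 1"
    using p by (subst ln_mult_pos) auto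
  also have "ln ((a*h)^2) = 2 * ln (a*h)"
    using p by (subst ln_realpow) auto
  finally have "2 * high_snr_term a \<sigma> h = 2 * ln (a*h) - (ln (2*pi*\<sigma>\<^sup>2) + 1)"
    by (simp add: high_snr_term_def)
  moreover have "ln (a*h) = ln a + ln h" using assms by (simp add: ln_mult_pos)
  ultimately show ?thesis by linarith
qed

lemma info_rv_decomp:
  assumes a: "0 < a" and h: "0 < h" and s: "0 < \<sigma>" and x: "-a/2 < x" "x < a/2"
  shows "info_rv a \<sigma> (x, z, h)
    = high_snr_term a \<sigma> h + noise_term \<sigma> z - ln (window_prob a \<sigma> h (h*x + z))"
proof -
  let ?P = "window_prob a \<sigma> h (h*x + z)"
  have "cond_dens \<sigma> h x (h*x + z) = normal_density 0 \<sigma> z"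
    unfolding cond_dens_def normal_density_def by simp
  then have "info_rv a \<sigma> (x, z, h) = ln (normal_density 0 \<sigma> z * (a*h) / ?P)"
    by (simp add: info_rv_def info_dens_def out_dens_eq_window_prob[OF a h])
  also have "\<dots> = ln (normal_density 0 \<sigma> z) + ln (a*h) - ln ?P"
    using window_prob_pos[OF a h s x] normal_density_pos[OF s] a h
    by (simp add: ln_divide_pos ln_mult_pos)
  finally show ?thesis
    using a h by (simp add: high_snr_term_eq[OF a h s] ln_normal_density[OF s] noise_term_def ln_mult_pos)
qed

lemma minus_ln_window_prob_nonneg:
  assumes "0 < a" "0 < h" "0 < \<sigma>" "-a/2 < x" "x < a/2"
  shows "0 \<le> - ln (window_prob a \<sigma> h (h*x + z))"
  using window_prob_pos[OF assms] window_prob_le_1[OF assms(3)] by simp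

lemma minus_ln_window_prob_le:
  assumes a: "0 < a" and h: "0 < h" and s: "0 < \<sigma>" and x: "-a/2 < x" "x < a/2"
    and sa: "\<sigma> \<le> a"
  shows "- ln (window_prob a \<sigma> h (h*x + z)) \<le> 4 + z\<^sup>2/\<sigma>\<^sup>2 + \<bar>ln h\<bar>"
proof -
  define L where "L = min (h*a/2) \<sigma>"
  define N where "N = normal_density 0 \<sigma> (\<bar>z\<bar> + \<sigma>)"
  have L: "0 < L" using a h s by (simp add: L_def)
  have N: "0 < N" unfolding N_def by (rule normal_density_pos[OF s])
  have "ln (L * N) \<le> ln (window_prob a \<sigma> h (h*x + z))"
    using window_prob_ge_Gaussian[OF a h s x, of z] L N by (intro ln_mono) (auto simp: L_def N_def)
  then have P: "- ln (window_prob a \<sigma> h (h*x + z)) \<le> - ln (L/\<sigma>) - ln \<sigma> - ln N"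
    using L N s by (simp add: ln_mult_pos ln_div)
  have "ln (2*pi) \<le> ln 8" using pi_less_4 by (intro ln_mono) auto
  also have "ln (8::real) = 3 * ln 2" using ln_realpow[of 2 3] by simp
  finally have pi8: "ln (2*pi)/2 \<le> 3/2" using ln_2_less_1 by simp
  have "(\<bar>z\<bar> + \<sigma>)\<^sup>2 \<le> 2*z\<^sup>2 + 2*\<sigma>\<^sup>2"
    using power2_sum3_le[of "\<bar>z\<bar>" \<sigma> 0] abs_2_mult_le_weighted_squares[of 1 "\<bar>z\<bar>" \<sigma>]
    by (simp add: power2_sum)
  then have "(\<bar>z\<bar> + \<sigma>)\<^sup>2/(2*\<sigma>\<^sup>2) \<le> (2*z\<^sup>2 + 2*\<sigma>\<^sup>2)/(2*\<sigma>\<^sup>2)"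
    using s by (intro divide_right_mono) auto
  also have "\<dots> = z\<^sup>2/\<sigma>\<^sup>2 + 1" using s by (simp add: field_simps)
  finally have Q: "(\<bar>z\<bar> + \<sigma>)\<^sup>2/(2*\<sigma>\<^sup>2) \<le> z\<^sup>2/\<sigma>\<^sup>2 + 1" .
  have "- ln N = ln (2*pi*\<sigma>\<^sup>2)/2 + (\<bar>z\<bar> + \<sigma>)\<^sup>2/(2*\<sigma>\<^sup>2)"
    unfolding N_def ln_normal_density[OF s] by simp
  moreover have "ln (2*pi*\<sigma>\<^sup>2) = ln (2*pi) + 2 * ln \<sigma>"
    using s by (simp add: ln_mult_pos ln_realpow)
  ultimately have "- ln N \<le> 3/2 + ln \<sigma> + z\<^sup>2/\<sigma>\<^sup>2 + 1" using pi8 Q by linarith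
  moreover have "- ln (L/\<sigma>) \<le> 1 + \<bar>ln h\<bar>"
  proof (cases "\<sigma> \<le> h*a/2")
    case True
    then show ?thesis using s by (simp add: L_def)
  next
    case False
    then have "L/\<sigma> = h * (a/\<sigma>) / 2" using s by (simp add: L_def field_simps)
    moreover have "h * 1 \<le> h * (a/\<sigma>)" using h sa s by (intro mult_left_mono) auto
    ultimately have "ln (h/2) \<le> ln (L/\<sigma>)" using h by (intro ln_mono) auto
    moreover have "ln (h/2) = ln h - ln 2" using h by (simp add: ln_div)
    ultimately show ?thesis using ln_2_less_1 by linarith
  qed
  ultimately show ?thesis using P by linarith
qed

lemma minus_ln_window_prob_le_inverse_square:
  assumes a: "0 < a" and h: "0 < h" and s: "0 < \<sigma>" and x: "-a/2 < x" "x < a/2"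
    and K: "2 \<le> K\<^sup>2" "0 < K" and z: "\<bar>z\<bar> \<le> K*\<sigma>"
    and left: "2*K*\<sigma> < h*(x + a/2)" and right: "2*K*\<sigma> < h*(a/2 - x)"
  shows "- ln (window_prob a \<sigma> h (h*x + z)) \<le> 2 / K\<^sup>2"
proof -
  let ?P = "window_prob a \<sigma> h (h*x + z)"
  have "1 - \<sigma>\<^sup>2/(K*\<sigma>)\<^sup>2 \<le> ?P"
  proof (rule window_prob_ge_Chebyshev[OF s])
    show "0 < K*\<sigma>" using K s by simp
    fix u assume u: "\<bar>u\<bar> \<le> K*\<sigma>"
    have e: "(h*x + z - u)/h = x + (z - u)/h" using h by (simp add: field_simps)
    have "\<bar>(z - u)/h\<bar> \<le> 2*K*\<sigma>/h" using u z h by (simp add: divide_right_mono)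
    moreover have "2*K*\<sigma>/h < x + a/2" "2*K*\<sigma>/h < a/2 - x"
      using left right h by (simp_all add: field_simps)
    ultimately show "-a/2 < (h*x + z - u)/h \<and> (h*x + z - u)/h < a/2"
      unfolding e by linarith
  qed
  moreover have "\<sigma>\<^sup>2/(K*\<sigma>)\<^sup>2 = 1/K\<^sup>2" using s by (simp add: power_mult_distrib)
  ultimately have P: "1 - 1/K\<^sup>2 \<le> ?P" by simp
  define v where "v = 1/K\<^sup>2"
  have v: "0 \<le> v" "v \<le> 1/2" using K by (auto simp: v_def field_simps)
  have "- v - 2 * v\<^sup>2 \<le> ln (1 - v)" by (rule ln_one_minus_pos_lower_bound[OF v])
  moreover have "ln (1 - v) \<le> ln ?P" using P v by (intro ln_mono) (auto simp: v_def)
  moreover have "v\<^sup>2 \<le> v/2" using v by (simp add: power2_eq_square mult_left_mono[of v "1/2" v, simplified])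
  ultimately show ?thesis by (simp add: v_def)
qed

lemma
  fixes F :: "real \<Rightarrow> real"
  assumes a: "0 < a" and lu: "l \<le> u" and Fm[measurable]: "F \<in> borel_measurable borel"
    and F01: "\<And>x. 0 \<le> F x \<and> F x \<le> 1"
    and F_le: "\<And>x. -a/2 < x \<Longrightarrow> x < a/2 \<Longrightarrow> F x \<le> indicator {l..u} x"
  shows integrable_law_X_bounded: "integrable (law_X a) F"
    and integral_law_X_le_interval: "integral\<^sup>L (law_X a) F \<le> (u - l) / a"
proof -
  interpret prob_space "law_X a" by (rule prob_space_law_X[OF a])
  show "integrable (law_X a) F"
    by (rule integrable_const_bound[where B=1]) (use F01 in auto)
  have int: "integrable lborel (\<lambda>x. indicator {l..u} x / a)"
    using lu by (auto intro!: integrable_real_indicator)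
  have le: "indicator {-a/2<..<a/2} x / a * F x \<le> indicator {l..u} x / a" for x
  proof (cases "-a/2 < x \<and> x < a/2")
    case True
    then show ?thesis using F_le[of x] a by (simp add: divide_right_mono)
  qed (use a in simp)
  have "integrable lborel (\<lambda>x. indicator {-a/2<..<a/2} x / a * F x)"
  proof (rule Bochner_Integration.integrable_bound[OF int])
    show "AE x in lborel. norm (indicator {-a/2<..<a/2} x / a * F x) \<le> norm (indicator {l..u} x / a)"
      using le F01 a by (intro AE_I2) (simp add: abs_of_nonneg)
  qed simp
  then have "integral\<^sup>L (law_X a) F \<le> (\<integral>x. indicator {l..u} x / a \<partial>lborel)"
    unfolding integral_law_X[OF a Fm] using int le by (rule integral_mono)
  also have "\<dots> = (u - l) / a" using lu by simp
  finally show "integral\<^sup>L (law_X a) F \<le> (u - l) / a" .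
qed

lemma
  assumes a: "0 < a" and w: "0 \<le> w"
  shows integrable_law_X_near_left_edge: "integrable (law_X a) (\<lambda>x. indicator {..w} (x + a/2) :: real)"
    and integral_law_X_near_left_edge: "(\<integral>x. indicator {..w} (x + a/2) \<partial>law_X a) \<le> w / a"
proof -
  have "(\<lambda>x::real. indicator {..w} (x + a/2) :: real) \<in> borel_measurable borel" by measurable
  note bounds = integrable_law_X_bounded[OF a _ this] integral_law_X_le_interval[OF a _ this]
  show "integrable (law_X a) (\<lambda>x. indicator {..w} (x + a/2) :: real)"
    using bounds(1)[of "-a/2" "w - a/2"] w by (auto simp: indicator_def)
  show "(\<integral>x. indicator {..w} (x + a/2) \<partial>law_X a) \<le> w / a"
    using bounds(2)[of "-a/2" "w - a/2"] w by (auto simp: indicator_def)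
qed

lemma
  assumes a: "0 < a" and w: "0 \<le> w"
  shows integrable_law_X_near_right_edge: "integrable (law_X a) (\<lambda>x. indicator {..w} (a/2 - x) :: real)"
    and integral_law_X_near_right_edge: "(\<integral>x. indicator {..w} (a/2 - x) \<partial>law_X a) \<le> w / a"
proof -
  have "(\<lambda>x::real. indicator {..w} (a/2 - x) :: real) \<in> borel_measurable borel" by measurable
  note bounds = integrable_law_X_bounded[OF a _ this] integral_law_X_le_interval[OF a _ this]
  show "integrable (law_X a) (\<lambda>x. indicator {..w} (a/2 - x) :: real)"
    using bounds(1)[of "a/2 - w" "a/2"] w by (auto simp: indicator_def)
  show "(\<integral>x. indicator {..w} (a/2 - x) \<partial>law_X a) \<le> w / a"
    using bounds(2)[of "a/2 - w" "a/2"] w by (auto simp: indicator_def)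
qed

lemma
  assumes s: "0 < \<sigma>"
  shows integrable_law_Z_even_power: "integrable (law_Z \<sigma>) (\<lambda>z. z^(2*k))"
    and integral_law_Z_even_power: "(\<integral>z. z^(2*k) \<partial>law_Z \<sigma>) = fact (2 * k) / ((2 / \<sigma>\<^sup>2)^k * fact k)"
proof -
  have hb: "has_bochner_integral lborel (\<lambda>x. normal_density 0 \<sigma> x * (x - 0) ^ (2 * k))
      (fact (2 * k) / ((2 / \<sigma>\<^sup>2)^k * fact k))"
    by (rule normal_moment_even[OF s])
  have [measurable]: "normal_density 0 \<sigma> \<in> borel_measurable lborel"
    unfolding normal_density_def by measurable
  show "integrable (law_Z \<sigma>) (\<lambda>z. z^(2*k))"
    unfolding law_Z_def using hb by (subst integrable_density) (auto simp: has_bochner_integral_iff)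
  show "(\<integral>z. z^(2*k) \<partial>law_Z \<sigma>) = fact (2 * k) / ((2 / \<sigma>\<^sup>2)^k * fact k)"
    unfolding law_Z_def using hb by (subst integral_density) (auto simp: has_bochner_integral_iff)
qed

lemma law_Z_moment_2: "0 < \<sigma> \<Longrightarrow> integrable (law_Z \<sigma>) (\<lambda>z. z\<^sup>2) \<and> (\<integral>z. z\<^sup>2 \<partial>law_Z \<sigma>) = \<sigma>\<^sup>2"
  using integrable_law_Z_even_power[of \<sigma> 1] integral_law_Z_even_power[of \<sigma> 1] by simp

lemma law_Z_moment_4: "0 < \<sigma> \<Longrightarrow> integrable (law_Z \<sigma>) (\<lambda>z. z^4) \<and> (\<integral>z. z^4 \<partial>law_Z \<sigma>) = 3 * \<sigma>^4"
  using integrable_law_Z_even_power[of \<sigma> 2] integral_law_Z_even_power[of \<sigma> 2]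
  by (simp add: fact_numeral power_divide power_mult_distrib flip: power_mult)

lemma law_Z_moment_8: "0 < \<sigma> \<Longrightarrow> integrable (law_Z \<sigma>) (\<lambda>z. z^8) \<and> (\<integral>z. z^8 \<partial>law_Z \<sigma>) = 105 * \<sigma>^8"
  using integrable_law_Z_even_power[of \<sigma> 4] integral_law_Z_even_power[of \<sigma> 4]
  by (simp add: fact_numeral power_divide power_mult_distrib flip: power_mult)

lemma
  assumes s: "0 < \<sigma>"
  shows integrable_noise_term: "integrable (law_Z \<sigma>) (noise_term \<sigma>)"
    and integral_noise_term: "integral\<^sup>L (law_Z \<sigma>) (noise_term \<sigma>) = 0"
    and integrable_noise_term_square: "integrable (law_Z \<sigma>) (\<lambda>z. (noise_term \<sigma> z)\<^sup>2)"
    and integral_noise_term_square: "(\<integral>z. (noise_term \<sigma> z)\<^sup>2 \<partial>law_Z \<sigma>) = 1/2"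
proof -
  interpret prob_space "law_Z \<sigma>" using prob_space_law_Z[OF s] .
  note m2 = law_Z_moment_2[OF s] and m4 = law_Z_moment_4[OF s]
  have W: "noise_term \<sigma> = (\<lambda>z. 1/2 - z\<^sup>2 / (2 * \<sigma>\<^sup>2))" by (simp add: noise_term_def fun_eq_iff)
  show "integrable (law_Z \<sigma>) (noise_term \<sigma>)" unfolding W using m2 by auto
  show "integral\<^sup>L (law_Z \<sigma>) (noise_term \<sigma>) = 0" unfolding W using m2 s by (simp add: prob_space)
  have W2: "(\<lambda>z. (noise_term \<sigma> z)\<^sup>2) = (\<lambda>z. 1/4 - z\<^sup>2 / (2 * \<sigma>\<^sup>2) + z^4 / (4 * \<sigma>^4))"
    using s by (auto simp: noise_term_def fun_eq_iff power2_eq_square field_simps eval_nat_numeral)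
  show "integrable (law_Z \<sigma>) (\<lambda>z. (noise_term \<sigma> z)\<^sup>2)" unfolding W2 using m2 m4 by auto
  have "(\<integral>z. (noise_term \<sigma> z)\<^sup>2 \<partial>law_Z \<sigma>) = 1/4 - \<sigma>\<^sup>2 / (2 * \<sigma>\<^sup>2) + 3 * \<sigma>^4 / (4 * \<sigma>^4)"
    unfolding W2 using m2 m4 by (simp add: prob_space)
  also have "\<dots> = 1/2" using s by (simp add: field_simps)
  finally show "(\<integral>z. (noise_term \<sigma> z)\<^sup>2 \<partial>law_Z \<sigma>) = 1/2" .
qed

definition window_loss :: "real \<Rightarrow> real \<Rightarrow> real \<times> real \<times> real \<Rightarrow> real" where
  "window_loss a \<sigma> \<omega> = info_rv a \<sigma> \<omega> - high_snr_term a \<sigma> (snd (snd \<omega>)) - noise_term \<sigma> (fst (snd \<omega>))"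

lemma window_loss_eq:
  assumes "0 < a" "0 < h" "0 < \<sigma>" "-a/2 < x" "x < a/2"
  shows "window_loss a \<sigma> (x, z, h) = - ln (window_prob a \<sigma> h (h*x + z))"
  using info_rv_decomp[OF assms] by (simp add: window_loss_def)

definition loss_bound :: "real \<Rightarrow> real \<times> real \<times> real \<Rightarrow> real" where
  "loss_bound \<sigma> \<omega> = 4 + (fst (snd \<omega>))\<^sup>2 / \<sigma>\<^sup>2 + \<bar>ln (snd (snd \<omega>))\<bar>"

definition loss_dominator :: "real \<Rightarrow> real \<times> real \<times> real \<Rightarrow> real" where
  "loss_dominator \<sigma> \<omega> = 256 + (fst (snd \<omega>))^8 / \<sigma>^8 + (ln (snd (snd \<omega>)))^4"

lemma loss_bound_ge_1: "1 \<le> loss_bound \<sigma> \<omega>"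
  by (simp add: loss_bound_def)

lemma abs_noise_term_le_loss_bound: "\<bar>noise_term \<sigma> (fst (snd \<omega>))\<bar> \<le> loss_bound \<sigma> \<omega>"
proof -
  have "(fst (snd \<omega>))\<^sup>2 / (2 * \<sigma>\<^sup>2) = (fst (snd \<omega>))\<^sup>2 / \<sigma>\<^sup>2 / 2" by simp
  moreover have "0 \<le> (fst (snd \<omega>))\<^sup>2 / \<sigma>\<^sup>2" by simp
  ultimately show ?thesis unfolding noise_term_def loss_bound_def by arith
qed

lemma loss_bound_power_le_dominator:
  assumes "k \<le> 4"
  shows "loss_bound \<sigma> \<omega> ^ k \<le> 27 * loss_dominator \<sigma> \<omega>"
proof -
  have "loss_bound \<sigma> \<omega> ^ k \<le> loss_bound \<sigma> \<omega> ^ 4"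
    using assms loss_bound_ge_1 by (rule power_increasing)
  also have "\<dots> \<le> 27 * (4^4 + ((fst (snd \<omega>))\<^sup>2 / \<sigma>\<^sup>2)^4 + \<bar>ln (snd (snd \<omega>))\<bar>^4)"
    unfolding loss_bound_def by (rule power4_sum3_le)
  also have "\<dots> = 27 * loss_dominator \<sigma> \<omega>"
    by (simp add: loss_dominator_def power_divide power_even_abs flip: power_mult)
  finally show ?thesis .
qed

lemma AE_window_loss_bounds:
  assumes a: "0 < a" and s: "0 < \<sigma>" and sa: "\<sigma> \<le> a" and pdf: "is_pdf_nonneg f"
  shows "AE \<omega> in joint_law a \<sigma> f. 0 \<le> window_loss a \<sigma> \<omega> \<and> window_loss a \<sigma> \<omega> \<le> loss_bound \<sigma> \<omega>"
  using AE_joint_law_support[OF a s pdf]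
proof eventually_elim
  fix \<omega> :: "real \<times> real \<times> real"
  assume "-a/2 < fst \<omega> \<and> fst \<omega> < a/2 \<and> 0 < snd (snd \<omega>)"
  moreover obtain x z h where \<omega>: "\<omega> = (x, z, h)" by (cases \<omega>) auto
  ultimately have x: "-a/2 < x" "x < a/2" and h: "0 < h" by auto
  show "0 \<le> window_loss a \<sigma> \<omega> \<and> window_loss a \<sigma> \<omega> \<le> loss_bound \<sigma> \<omega>"
    using minus_ln_window_prob_nonneg[OF a h s x] minus_ln_window_prob_le[OF a h s x sa]
    by (simp add: \<omega> window_loss_eq[OF a h s x] loss_bound_def)
qed

text \<open>The score is below 1 exactly when \<bar>Z\<bar> < \<sigma>/t, H \<ge> t^2 and X is farther than 2\<sigma>/t^3
  from both edges of its support; its expectation bounds the probability of the complement.\<close>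
definition bad_score :: "real \<Rightarrow> real \<Rightarrow> real \<Rightarrow> real \<times> real \<times> real \<Rightarrow> real" where
  "bad_score a \<sigma> t \<omega> = t\<^sup>2 * ((fst (snd \<omega>))\<^sup>2 / \<sigma>\<^sup>2) + indicator {0<..<t\<^sup>2} (snd (snd \<omega>))
    + indicator {..2*\<sigma>/t^3} (fst \<omega> + a/2) + indicator {..2*\<sigma>/t^3} (a/2 - fst \<omega>)"

lemma bad_score_nonneg: "0 \<le> bad_score a \<sigma> t \<omega>"
  by (simp add: bad_score_def)

lemma window_loss_le_of_bad_score_lt_1:
  assumes a: "0 < a" and s: "0 < \<sigma>" and t: "0 < t" "t \<le> 1/2"
    and x: "-a/2 < x" "x < a/2" and h: "0 < h"
    and good: "bad_score a \<sigma> t (x, z, h) < 1"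
  shows "window_loss a \<sigma> (x, z, h) \<le> 2*t\<^sup>2"
proof -
  define w where "w = 2*\<sigma>/t^3"
  define K where "K = 1/t"
  have t2: "0 < t\<^sup>2" using t by simp
  have score: "t\<^sup>2 * (z\<^sup>2 / \<sigma>\<^sup>2) + indicator {0<..<t\<^sup>2} h + indicator {..w} (x + a/2)
      + indicator {..w} (a/2 - x) < (1::real)"
    using good by (simp add: bad_score_def w_def)
  moreover have "0 \<le> t\<^sup>2 * (z\<^sup>2 / \<sigma>\<^sup>2)" "0 \<le> (indicator {0<..<t\<^sup>2} h :: real)"
    "0 \<le> (indicator {..w} (x + a/2) :: real)" "0 \<le> (indicator {..w} (a/2 - x) :: real)"
    by simp_all
  ultimately have "t\<^sup>2 * (z\<^sup>2 / \<sigma>\<^sup>2) < 1" "(indicator {0<..<t\<^sup>2} h :: real) < 1"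
    "(indicator {..w} (x + a/2) :: real) < 1" "(indicator {..w} (a/2 - x) :: real) < 1"
    by linarith+
  then have "t\<^sup>2 * (z\<^sup>2 / \<sigma>\<^sup>2) < 1" "h \<notin> {0<..<t\<^sup>2}" "\<not> x + a/2 \<le> w" "\<not> a/2 - x \<le> w"
    by (auto simp: indicator_def split: if_splits)
  then have z: "z\<^sup>2 < (K*\<sigma>)\<^sup>2" and ht: "t\<^sup>2 \<le> h" and "w < x + a/2" "w < a/2 - x"
    using t2 s h by (auto simp: K_def field_simps power_divide power_mult_distrib)
  then have edges: "t\<^sup>2 * w < t\<^sup>2 * (x + a/2)" "t\<^sup>2 * w < t\<^sup>2 * (a/2 - x)"
    using t2 by simp_all
  have K: "0 < K" "K\<^sup>2 = 1/t\<^sup>2" using t by (simp_all add: K_def power_divide)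
  have "t\<^sup>2 \<le> 1/4" using t power_mono[of t "1/2" 2] by (simp add: power_divide)
  then have K2: "2 \<le> K\<^sup>2" unfolding K(2) using t2 by (simp add: field_simps)
  have zK: "\<bar>z\<bar> \<le> K*\<sigma>"
    using z K s by (metis abs_le_square_iff abs_of_pos less_imp_le mult_pos_pos)
  have Kw: "2*K*\<sigma> = t\<^sup>2 * w" unfolding K_def w_def using t by (simp add: field_simps eval_nat_numeral)
  have "t\<^sup>2 * (x + a/2) \<le> h * (x + a/2)" "t\<^sup>2 * (a/2 - x) \<le> h * (a/2 - x)"
    using ht x by (simp_all add: mult_right_mono)
  then have "2*K*\<sigma> < h*(x + a/2)" "2*K*\<sigma> < h*(a/2 - x)" using edges Kw by linarith+
  from minus_ln_window_prob_le_inverse_square[OF a h s x K2 K(1) zK this]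
  show ?thesis unfolding window_loss_eq[OF a h s x] K(2) by simp
qed

lemma has_bochner_integral_powr_0:
  fixes p e :: real
  assumes p: "p > -1" and e: "e \<ge> 0"
  shows "has_bochner_integral lborel (\<lambda>h. indicator {0..e} h * h powr p) (e powr (p+1)/(p+1))"
proof -
  have "(\<lambda>h. indicator {0..e} h * h powr p) = (\<lambda>x. if x \<in> {0..e} then x powr p else 0)"
    by (auto simp: indicator_def)
  then have "((\<lambda>h. indicator {0..e} h * h powr p) has_integral (e powr (p+1)/(p+1))) UNIV"
    using has_integral_restrict_UNIV[of "{0..e}" "\<lambda>h. h powr p"] has_integral_powr_from_0[OF p e]
    by simp
  then have "integral\<^sup>N lborel (\<lambda>h. indicator {0..e} h * h powr p) = e powr (p+1)/(p+1)"
    by (rule nn_integral_has_integral_lborel[rotated 2]) auto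
  then show ?thesis using p by (intro has_bochner_integral_nn_integral) auto
qed

locale fading_model =
  fixes f :: "real \<Rightarrow> real" and \<alpha>' c \<delta> :: real
  assumes pdf: "is_pdf_nonneg f" and exponent_pos: "0 < \<alpha>'" and coeff_pos: "0 < c"
    and delta_pos: "0 < \<delta>"
    and near_0: "\<And>h. 0 < h \<Longrightarrow> h < \<delta> \<Longrightarrow> f h = c * h powr (\<alpha>' - 1)"
    and integrable_square: "integrable (law_H f) (\<lambda>h. h\<^sup>2)"
begin

lemma prob_space_H: "prob_space (law_H f)"
  by (rule prob_space_law_H[OF pdf])

lemma measurable_f[measurable]: "f \<in> borel_measurable borel"
  using pdf by (simp add: is_pdf_nonneg_def)

lemma f_nonneg: "0 \<le> f h"
  using pdf by (simp add: is_pdf_nonneg_def)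

lemma f_neg: "h < 0 \<Longrightarrow> f h = 0"
  using pdf by (simp add: is_pdf_nonneg_def)

text \<open>Large h are controlled by the second moment, small h by the h powr (\<alpha>'-1) behaviour.\<close>
lemma density_ln_power4_le:
  defines "d \<equiv> min \<delta> 1"
  shows "f h * (ln h)^4
    \<le> 16 * (f h * h\<^sup>2) + (ln d)^4 * f h + c * (8/\<alpha>')^4 * (indicator {0..d} h * h powr (\<alpha>'/2 - 1))"
    (is "_ \<le> ?D")
proof -
  have d: "0 < d" "d \<le> \<delta>" "d \<le> 1" using delta_pos by (auto simp: d_def)
  have parts: "0 \<le> 16 * (f h * h\<^sup>2)" "0 \<le> (ln d)^4 * f h"
    "0 \<le> c * (8/\<alpha>')^4 * (indicator {0..d} h * h powr (\<alpha>'/2 - 1))"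
    using f_nonneg[of h] coeff_pos exponent_pos by (auto simp: indicator_def zero_le_even_power)
  consider "h \<le> 0" | "1 \<le> h" | "d \<le> h" "h < 1" | "0 < h" "h < d" by linarith
  then show ?thesis
  proof cases
    case 1
    then have "f h * (ln h)^4 = 0" using f_neg by (cases "h = 0") auto
    then show ?thesis using parts by linarith
  next
    case 2
    then have "f h * (ln h)^4 \<le> f h * (16 * h\<^sup>2)" by (intro mult_left_mono ln_power4_le_square f_nonneg)
    then show ?thesis using parts by simp
  next
    case 3
    then have "ln d \<le> ln h" "ln h \<le> 0" using d by auto
    then have "(ln h)^4 \<le> (ln d)^4" using power_mono[of "- ln h" "- ln d" 4] by simp
    then have "f h * (ln h)^4 \<le> (ln d)^4 * f h" using f_nonneg[of h] by (simp add: mult_left_mono mult.commute)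
    then show ?thesis using parts by simp
  next
    case 4
    define \<gamma> where "\<gamma> = \<alpha>'/8"
    have \<gamma>: "0 < \<gamma>" "8/\<alpha>' = 1/\<gamma>" using exponent_pos by (simp_all add: \<gamma>_def)
    have "(ln h)^4 \<le> h powr (-4*\<gamma>) / \<gamma>^4" using ln_power4_le_powr[of h \<gamma>] 4 d \<gamma> by simp
    then have "f h * (ln h)^4 \<le> c * h powr (\<alpha>' - 1) * (h powr (-4*\<gamma>) / \<gamma>^4)"
      unfolding near_0[OF 4(1) order.strict_trans2[OF 4(2) d(2)]] using coeff_pos
      by (intro mult_left_mono) auto
    also have "\<dots> = c * (8/\<alpha>')^4 * (h powr (\<alpha>' - 1) * h powr (-4*\<gamma>))"
      by (simp add: \<gamma> power_divide)
    also have "h powr (\<alpha>' - 1) * h powr (-4*\<gamma>) = indicator {0..d} h * h powr (\<alpha>'/2 - 1)"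
      using 4 by (simp add: \<gamma>_def indicator_def flip: powr_add)
    finally show ?thesis using parts by simp
  qed
qed

lemma integrable_ln_power4: "integrable (law_H f) (\<lambda>h. (ln h)^4)"
proof -
  define d where "d = min \<delta> 1"
  have "integrable lborel (\<lambda>h. f h * h\<^sup>2)"
    using integrable_square by (subst (asm) integrable_law_H_iff[OF pdf]) auto
  moreover have "integrable lborel f"
    using pdf unfolding is_pdf_nonneg_def by (intro integrableI_nonneg) auto
  moreover have "integrable lborel (\<lambda>h. indicator {0..d} h * h powr (\<alpha>'/2 - 1))"
    using has_bochner_integral_powr_0[of "\<alpha>'/2 - 1" d] exponent_pos delta_pos
    by (simp add: has_bochner_integral_iff d_def)
  ultimately have "integrable lborel (\<lambda>h. 16 * (f h * h\<^sup>2) + (ln d)^4 * f h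
      + c * (8/\<alpha>')^4 * (indicator {0..d} h * h powr (\<alpha>'/2 - 1)))"
    by simp
  then have "integrable lborel (\<lambda>h. f h * (ln h)^4)"
  proof (rule Bochner_Integration.integrable_bound)
    show "AE h in lborel. norm (f h * (ln h)^4) \<le> norm (16 * (f h * h\<^sup>2) + (ln d)^4 * f h
        + c * (8/\<alpha>')^4 * (indicator {0..d} h * h powr (\<alpha>'/2 - 1)))"
    proof (rule AE_I2)
      fix h
      have "0 \<le> f h * (ln h)^4" using f_nonneg[of h] by (simp add: zero_le_even_power)
      then show "norm (f h * (ln h)^4) \<le> norm (16 * (f h * h\<^sup>2) + (ln d)^4 * f h
          + c * (8/\<alpha>')^4 * (indicator {0..d} h * h powr (\<alpha>'/2 - 1)))"
        using density_ln_power4_le[of h] unfolding d_def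
        by (simp add: abs_of_nonneg)
    qed
  qed simp
  then show ?thesis by (subst integrable_law_H_iff[OF pdf]) auto
qed

lemma integral_law_H_near_0:
  assumes e: "0 < \<epsilon>" "\<epsilon> \<le> \<delta>"
  shows "integrable (law_H f) (indicator {0<..<\<epsilon>} :: real \<Rightarrow> real)"
    and "(\<integral>h. indicator {0<..<\<epsilon>} h \<partial>law_H f) \<le> c / \<alpha>' * \<epsilon> powr \<alpha>'"
proof -
  have hb: "has_bochner_integral lborel (\<lambda>h. c * (indicator {0..\<epsilon>} h * h powr (\<alpha>' - 1))) (c * (\<epsilon> powr \<alpha>' / \<alpha>'))"
    using has_bochner_integral_powr_0[of "\<alpha>' - 1" \<epsilon>] exponent_pos e
    by (intro has_bochner_integral_mult_right) simp
  then have int_c: "integrable lborel (\<lambda>h. c * (indicator {0..\<epsilon>} h * h powr (\<alpha>' - 1)))"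
    by (simp add: has_bochner_integral_iff)
  have le: "f h * indicator {0<..<\<epsilon>} h \<le> c * (indicator {0..\<epsilon>} h * h powr (\<alpha>' - 1))" for h
    using near_0[of h] e coeff_pos by (auto simp: indicator_def)
  have int: "integrable lborel (\<lambda>h. f h * indicator {0<..<\<epsilon>} h)"
  proof (rule Bochner_Integration.integrable_bound[OF int_c])
    show "AE h in lborel. norm (f h * indicator {0<..<\<epsilon>} h) \<le> norm (c * (indicator {0..\<epsilon>} h * h powr (\<alpha>' - 1)))"
      using le f_nonneg by (intro AE_I2) (simp add: abs_of_nonneg order_trans[OF _ abs_ge_self])
  qed simp
  show "integrable (law_H f) (indicator {0<..<\<epsilon>} :: real \<Rightarrow> real)"
    using int by (subst integrable_law_H_iff[OF pdf]) auto
  have "(\<integral>h. indicator {0<..<\<epsilon>} h \<partial>law_H f) = (\<integral>h. f h * indicator {0<..<\<epsilon>} h \<partial>lborel)"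
    by (rule integral_law_H[OF pdf]) simp
  also have "\<dots> \<le> c * (\<epsilon> powr \<alpha>' / \<alpha>')"
    using integral_mono[OF int int_c le] has_bochner_integral_integral_eq[OF hb]
    by simp
  finally show "(\<integral>h. indicator {0<..<\<epsilon>} h \<partial>law_H f) \<le> c / \<alpha>' * \<epsilon> powr \<alpha>'" by simp
qed

lemma integrable_ln_power2: "integrable (law_H f) (\<lambda>h. (ln h)\<^sup>2)"
proof -
  interpret prob_space "law_H f" by (rule prob_space_H)
  show ?thesis
    by (rule Bochner_Integration.integrable_bound[of _ "\<lambda>h. 1 + (ln h)^4"])
      (use integrable_ln_power4 power2_le_1_plus_power4 in auto)
qed

lemma integrable_ln: "integrable (law_H f) (\<lambda>h. ln h)"
proof -
  interpret prob_space "law_H f" by (rule prob_space_H)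
  show ?thesis
    by (rule Bochner_Integration.integrable_bound[of _ "\<lambda>h. 1 + (ln h)^4"])
      (use integrable_ln_power4 abs_le_1_plus_power4 in auto)
qed

definition ln_moment4 :: real where "ln_moment4 = (\<integral>h. (ln h)^4 \<partial>law_H f)"

definition ln_moment2 :: real where "ln_moment2 = (\<integral>h. (ln h)\<^sup>2 \<partial>law_H f)"

lemma ln_moment4_nonneg: "0 \<le> ln_moment4"
  unfolding ln_moment4_def by (intro integral_nonneg_AE) (simp add: zero_le_even_power)

lemma ln_moment2_nonneg: "0 \<le> ln_moment2"
  unfolding ln_moment2_def by (intro integral_nonneg_AE) simp

lemma AE_high_snr_term_eq:
  assumes "0 < a" "0 < \<sigma>"
  shows "AE h in law_H f. high_snr_term a \<sigma> h = ln h + (ln a - ln (2*pi*\<sigma>\<^sup>2)/2 - 1/2)"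
  using AE_law_H_pos[OF pdf] by eventually_elim (simp add: high_snr_term_eq assms)

lemma
  assumes a: "0 < a" and s: "0 < \<sigma>"
  shows integrable_high_snr_term: "integrable (law_H f) (high_snr_term a \<sigma>)"
    and integral_high_snr_term:
      "integral\<^sup>L (law_H f) (high_snr_term a \<sigma>) = integral\<^sup>L (law_H f) (high_snr_term 1 \<sigma>) + ln a"
proof -
  interpret prob_space "law_H f" by (rule prob_space_H)
  have [measurable]: "high_snr_term b \<sigma> \<in> borel_measurable borel" for b
    unfolding high_snr_term_def by measurable
  have lin: "integral\<^sup>L (law_H f) (high_snr_term b \<sigma>) = (\<integral>h. ln h \<partial>law_H f) + (ln b - ln (2*pi*\<sigma>\<^sup>2)/2 - 1/2)"
    and "integrable (law_H f) (high_snr_term b \<sigma>)" if "0 < b" for b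
  proof -
    have i: "integrable (law_H f) (\<lambda>h. ln h + (ln b - ln (2*pi*\<sigma>\<^sup>2)/2 - 1/2))"
      using integrable_ln by simp
    show "integrable (law_H f) (high_snr_term b \<sigma>)"
      using integrable_cong_AE[OF _ _ AE_high_snr_term_eq[OF that s]] i by simp
    show "integral\<^sup>L (law_H f) (high_snr_term b \<sigma>) = (\<integral>h. ln h \<partial>law_H f) + (ln b - ln (2*pi*\<sigma>\<^sup>2)/2 - 1/2)"
      using integral_cong_AE[OF _ _ AE_high_snr_term_eq[OF that s]] integrable_ln by (simp add: prob_space)
  qed
  show "integrable (law_H f) (high_snr_term a \<sigma>)" using a by fact
  show "integral\<^sup>L (law_H f) (high_snr_term a \<sigma>) = integral\<^sup>L (law_H f) (high_snr_term 1 \<sigma>) + ln a"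
    using lin[OF a] lin[of 1] by simp
qed

lemma
  assumes s: "0 < \<sigma>"
  defines "g \<equiv> high_snr_term 1 \<sigma>"
  shows integrable_variance_high_snr_term: "integrable (law_H f) (\<lambda>h. (g h - integral\<^sup>L (law_H f) g)\<^sup>2)"
    and variance_high_snr_term_le: "(\<integral>h. (g h - integral\<^sup>L (law_H f) g)\<^sup>2 \<partial>law_H f) \<le> ln_moment2"
proof -
  interpret prob_space "law_H f" by (rule prob_space_H)
  define m where "m = (\<integral>h. ln h \<partial>law_H f)"
  have [measurable]: "g \<in> borel_measurable borel" unfolding g_def high_snr_term_def by measurable
  have g: "AE h in law_H f. g h = ln h + (- ln (2*pi*\<sigma>\<^sup>2)/2 - 1/2)"
    using AE_high_snr_term_eq[of 1 \<sigma>] s by (simp add: g_def)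
  have mean: "integral\<^sup>L (law_H f) g = m + (- ln (2*pi*\<sigma>\<^sup>2)/2 - 1/2)"
    using integral_cong_AE[OF _ _ g] integrable_ln by (simp add: prob_space m_def)
  from g have AE: "AE h in law_H f. (g h - integral\<^sup>L (law_H f) g)\<^sup>2 = (ln h)\<^sup>2 - 2 * m * ln h + m\<^sup>2"
    by eventually_elim (simp add: mean power2_eq_square algebra_simps)
  have i: "integrable (law_H f) (\<lambda>h. (ln h)\<^sup>2 - 2 * m * ln h + m\<^sup>2)"
    using integrable_ln integrable_ln_power2 by simp
  show "integrable (law_H f) (\<lambda>h. (g h - integral\<^sup>L (law_H f) g)\<^sup>2)"
    using integrable_cong_AE[OF _ _ AE] i by simp
  have "(\<integral>h. (g h - integral\<^sup>L (law_H f) g)\<^sup>2 \<partial>law_H f) = ln_moment2 - m\<^sup>2"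
    using integral_cong_AE[OF _ _ AE] integrable_ln integrable_ln_power2
    by (simp add: prob_space ln_moment2_def m_def power2_eq_square)
  then show "(\<integral>h. (g h - integral\<^sup>L (law_H f) g)\<^sup>2 \<partial>law_H f) \<le> ln_moment2" by simp
qed

context
  fixes a \<sigma> :: real
  assumes a_pos: "0 < a" and sigma_pos: "0 < \<sigma>" and sigma_le: "\<sigma> \<le> a"
begin

abbreviation M :: "(real \<times> real \<times> real) measure" where "M \<equiv> joint_law a \<sigma> f"

lemma prob_space_M: "prob_space M"
  by (rule prob_space_joint_law[OF a_pos sigma_pos pdf])

lemma prob_space_ZH: "prob_space (law_Z \<sigma> \<Otimes>\<^sub>M law_H f)"
  by (intro prob_space_pair prob_space_law_Z[OF sigma_pos] prob_space_H)

lemma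
  fixes F :: "real \<Rightarrow> real"
  assumes "integrable (law_X a) F"
  shows integrable_M_X: "integrable M (\<lambda>\<omega>. F (fst \<omega>))"
    and integral_M_X: "(\<integral>\<omega>. F (fst \<omega>) \<partial>M) = integral\<^sup>L (law_X a) F"
  unfolding joint_law_def using integrable_pair_fst integral_pair_fst prob_space_ZH assms by auto

lemma
  fixes F :: "real \<times> real \<Rightarrow> real"
  assumes "integrable (law_Z \<sigma> \<Otimes>\<^sub>M law_H f) F"
  shows integrable_M_ZH: "integrable M (\<lambda>\<omega>. F (snd \<omega>))"
    and integral_M_ZH: "(\<integral>\<omega>. F (snd \<omega>) \<partial>M) = integral\<^sup>L (law_Z \<sigma> \<Otimes>\<^sub>M law_H f) F"
proof -
  have "sigma_finite_measure (law_Z \<sigma> \<Otimes>\<^sub>M law_H f)"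
    using prob_space_ZH by (simp add: prob_space_imp_sigma_finite)
  then show "integrable M (\<lambda>\<omega>. F (snd \<omega>))" "(\<integral>\<omega>. F (snd \<omega>) \<partial>M) = integral\<^sup>L (law_Z \<sigma> \<Otimes>\<^sub>M law_H f) F"
    unfolding joint_law_def
    using integrable_pair_snd integral_pair_snd prob_space_law_X[OF a_pos] assms by auto
qed

lemma
  fixes F :: "real \<Rightarrow> real"
  assumes "integrable (law_Z \<sigma>) F"
  shows integrable_M_Z: "integrable M (\<lambda>\<omega>. F (fst (snd \<omega>)))"
    and integral_M_Z: "(\<integral>\<omega>. F (fst (snd \<omega>)) \<partial>M) = integral\<^sup>L (law_Z \<sigma>) F"
  using integrable_M_ZH[of "\<lambda>p. F (fst p)"] integral_M_ZH[of "\<lambda>p. F (fst p)"]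
    integrable_pair_fst[OF prob_space_H assms] integral_pair_fst[OF prob_space_H assms]
  by simp_all

lemma
  fixes F :: "real \<Rightarrow> real"
  assumes "integrable (law_H f) F"
  shows integrable_M_H: "integrable M (\<lambda>\<omega>. F (snd (snd \<omega>)))"
    and integral_M_H: "(\<integral>\<omega>. F (snd (snd \<omega>)) \<partial>M) = integral\<^sup>L (law_H f) F"
  using integrable_M_ZH[of "\<lambda>p. F (snd p)"] integral_M_ZH[of "\<lambda>p. F (snd p)"]
    integrable_pair_snd[OF prob_space_law_Z[OF sigma_pos] _ assms]
    integral_pair_snd[OF prob_space_law_Z[OF sigma_pos] _ assms] prob_space_H
  by (simp_all add: prob_space_imp_sigma_finite)

lemma
  shows integrable_loss_dominator: "integrable M (loss_dominator \<sigma>)"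
    and integral_loss_dominator: "integral\<^sup>L M (loss_dominator \<sigma>) = 361 + ln_moment4"
proof -
  interpret prob_space M by (rule prob_space_M)
  have "integrable (law_Z \<sigma>) (\<lambda>z. z^8 / \<sigma>^8)" "(\<integral>z. z^8 / \<sigma>^8 \<partial>law_Z \<sigma>) = 105"
    using law_Z_moment_8[OF sigma_pos] sigma_pos by simp_all
  note Z = integrable_M_Z[OF this(1)] integral_M_Z[OF this(1)] this(2)
  note H = integrable_M_H[OF integrable_ln_power4] integral_M_H[OF integrable_ln_power4]
  show "integrable M (loss_dominator \<sigma>)"
    unfolding loss_dominator_def using Z H by simp
  show "integral\<^sup>L M (loss_dominator \<sigma>) = 361 + ln_moment4"
    unfolding loss_dominator_def using Z H sigma_pos by (simp add: prob_space ln_moment4_def)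
qed

lemma measurable_window_loss[measurable]: "window_loss a \<sigma> \<in> borel_measurable M"
  using measurable_info_rv[OF a_pos] unfolding window_loss_def high_snr_term_def noise_term_def
  by measurable

lemma AE_window_loss: "AE \<omega> in M. 0 \<le> window_loss a \<sigma> \<omega> \<and> window_loss a \<sigma> \<omega> \<le> loss_bound \<sigma> \<omega>"
  by (rule AE_window_loss_bounds[OF a_pos sigma_pos sigma_le pdf])

lemma integrable_window_loss: "integrable M (window_loss a \<sigma>)"
proof (rule Bochner_Integration.integrable_bound[of _ "\<lambda>\<omega>. 27 * loss_dominator \<sigma> \<omega>"])
  show "AE \<omega> in M. norm (window_loss a \<sigma> \<omega>) \<le> norm (27 * loss_dominator \<sigma> \<omega>)"
    using AE_window_loss
  proof eventually_elim
    fix \<omega> assume "0 \<le> window_loss a \<sigma> \<omega> \<and> window_loss a \<sigma> \<omega> \<le> loss_bound \<sigma> \<omega>"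
    then show "norm (window_loss a \<sigma> \<omega>) \<le> norm (27 * loss_dominator \<sigma> \<omega>)"
      using loss_bound_power_le_dominator[of 1 \<sigma> \<omega>] by simp
  qed
qed (simp_all add: integrable_loss_dominator)

lemma window_loss_mean_nonneg: "0 \<le> (\<integral>\<omega>. window_loss a \<sigma> \<omega> \<partial>M)"
  using AE_window_loss by (intro integral_nonneg_AE) (auto elim: AE_mp)

lemma
  shows integrable_info_rv: "integrable M (info_rv a \<sigma>)"
    and integrable_high_snr_term_M: "integrable M (\<lambda>\<omega>. high_snr_term a \<sigma> (snd (snd \<omega>)))"
    and integral_info_rv: "(\<integral>\<omega>. info_rv a \<sigma> \<omega> \<partial>M)
      = integral\<^sup>L (law_H f) (high_snr_term 1 \<sigma>) + ln a + (\<integral>\<omega>. window_loss a \<sigma> \<omega> \<partial>M)"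
    and integral_high_snr_term_M: "(\<integral>\<omega>. high_snr_term a \<sigma> (snd (snd \<omega>)) \<partial>M)
      = integral\<^sup>L (law_H f) (high_snr_term 1 \<sigma>) + ln a"
proof -
  note T = integrable_M_H[OF integrable_high_snr_term[OF a_pos sigma_pos]]
    integral_M_H[OF integrable_high_snr_term[OF a_pos sigma_pos]]
    integral_high_snr_term[OF a_pos sigma_pos]
  note W = integrable_M_Z[OF integrable_noise_term[OF sigma_pos]]
    integral_M_Z[OF integrable_noise_term[OF sigma_pos]] integral_noise_term[OF sigma_pos]
  have i: "info_rv a \<sigma> \<omega> = high_snr_term a \<sigma> (snd (snd \<omega>)) + noise_term \<sigma> (fst (snd \<omega>)) + window_loss a \<sigma> \<omega>" for \<omega>
    by (simp add: window_loss_def)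
  show "integrable M (info_rv a \<sigma>)"
    unfolding i using T W integrable_window_loss by simp
  show "integrable M (\<lambda>\<omega>. high_snr_term a \<sigma> (snd (snd \<omega>)))" by (fact T(1))
  show "(\<integral>\<omega>. high_snr_term a \<sigma> (snd (snd \<omega>)) \<partial>M) = integral\<^sup>L (law_H f) (high_snr_term 1 \<sigma>) + ln a"
    using T by simp
  show "(\<integral>\<omega>. info_rv a \<sigma> \<omega> \<partial>M)
      = integral\<^sup>L (law_H f) (high_snr_term 1 \<sigma>) + ln a + (\<integral>\<omega>. window_loss a \<sigma> \<omega> \<partial>M)"
    unfolding i using T W integrable_window_loss by simp
qed

lemma AE_info_rv_centered_eq:
  defines "g \<equiv> high_snr_term 1 \<sigma>"
  shows "AE \<omega> in M. info_rv a \<sigma> \<omega> - (\<integral>\<omega>. info_rv a \<sigma> \<omega> \<partial>M)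
    = (noise_term \<sigma> (fst (snd \<omega>)) + (g (snd (snd \<omega>)) - integral\<^sup>L (law_H f) g))
      + (window_loss a \<sigma> \<omega> - (\<integral>\<omega>. window_loss a \<sigma> \<omega> \<partial>M))"
  using AE_joint_law_support[OF a_pos sigma_pos pdf]
proof eventually_elim
  fix \<omega> :: "real \<times> real \<times> real" assume "-a/2 < fst \<omega> \<and> fst \<omega> < a/2 \<and> 0 < snd (snd \<omega>)"
  then have "high_snr_term a \<sigma> (snd (snd \<omega>)) = g (snd (snd \<omega>)) + ln a"
    using high_snr_term_eq[OF a_pos _ sigma_pos] high_snr_term_eq[OF _ _ sigma_pos, of 1] by (simp add: g_def)
  then show "info_rv a \<sigma> \<omega> - (\<integral>\<omega>. info_rv a \<sigma> \<omega> \<partial>M)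
    = (noise_term \<sigma> (fst (snd \<omega>)) + (g (snd (snd \<omega>)) - integral\<^sup>L (law_H f) g))
      + (window_loss a \<sigma> \<omega> - (\<integral>\<omega>. window_loss a \<sigma> \<omega> \<partial>M))"
    using window_loss_def[of a \<sigma> \<omega>] unfolding integral_info_rv by (simp add: g_def)
qed

lemma
  defines "G \<equiv> \<lambda>h. high_snr_term 1 \<sigma> h - integral\<^sup>L (law_H f) (high_snr_term 1 \<sigma>)"
  shows integrable_independent_part_square:
      "integrable M (\<lambda>\<omega>. (noise_term \<sigma> (fst (snd \<omega>)) + G (snd (snd \<omega>)))\<^sup>2)"
    and integral_independent_part_square:
      "(\<integral>\<omega>. (noise_term \<sigma> (fst (snd \<omega>)) + G (snd (snd \<omega>)))\<^sup>2 \<partial>M)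
        = 1/2 + (\<integral>h. (G h)\<^sup>2 \<partial>law_H f)"
proof -
  have [measurable]: "G \<in> borel_measurable borel" "noise_term \<sigma> \<in> borel_measurable borel"
    unfolding G_def high_snr_term_def noise_term_def by measurable
  have G2: "integrable (law_H f) (\<lambda>h. (G h)\<^sup>2)"
    using integrable_variance_high_snr_term[OF sigma_pos] by (simp add: G_def)
  have G0: "integral\<^sup>L (law_H f) G = 0"
  proof -
    interpret H: prob_space "law_H f" by (rule prob_space_H)
    show ?thesis using integrable_high_snr_term[OF _ sigma_pos, of 1] by (simp add: G_def H.prob_space)
  qed
  note W = integrable_noise_term_square[OF sigma_pos] integral_noise_term_square[OF sigma_pos]
  note WG = integrable_pair_mult[OF prob_space_law_Z[OF sigma_pos] prob_space_H W(1) G2 _ _ G0]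
    integral_pair_mult_centered[OF prob_space_law_Z[OF sigma_pos] prob_space_H W(1) G2 _ _ G0]
  have square: "(noise_term \<sigma> (fst (snd \<omega>)) + G (snd (snd \<omega>)))\<^sup>2 = (noise_term \<sigma> (fst (snd \<omega>)))\<^sup>2
      + 2 * (noise_term \<sigma> (fst (snd \<omega>)) * G (snd (snd \<omega>))) + (G (snd (snd \<omega>)))\<^sup>2" for \<omega>
    by (simp add: power2_eq_square algebra_simps)
  note lifted = integrable_M_Z[OF W(1)] integral_M_Z[OF W(1)]
    integrable_M_ZH[OF WG(1)] integral_M_ZH[OF WG(1)] integrable_M_H[OF G2] integral_M_H[OF G2]
  show "integrable M (\<lambda>\<omega>. (noise_term \<sigma> (fst (snd \<omega>)) + G (snd (snd \<omega>)))\<^sup>2)"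
    unfolding square using lifted by simp
  show "(\<integral>\<omega>. (noise_term \<sigma> (fst (snd \<omega>)) + G (snd (snd \<omega>)))\<^sup>2 \<partial>M) = 1/2 + (\<integral>h. (G h)\<^sup>2 \<partial>law_H f)"
    unfolding square using lifted WG(2) W(2) by simp
qed

lemma AE_abs_info_rv_sub_le:
  fixes I :: real
  defines "k \<equiv> \<bar>ln a\<bar> + \<bar>ln (2*pi*\<sigma>\<^sup>2)\<bar>/2 + 1/2 + \<bar>I\<bar> + 3"
  shows "AE \<omega> in M. \<bar>info_rv a \<sigma> \<omega> - I\<bar> \<le> k * loss_bound \<sigma> \<omega>"
  using AE_joint_law_support[OF a_pos sigma_pos pdf] AE_window_loss
proof eventually_elim
  fix \<omega> :: "real \<times> real \<times> real"
  assume support: "-a/2 < fst \<omega> \<and> fst \<omega> < a/2 \<and> 0 < snd (snd \<omega>)"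
    and loss: "0 \<le> window_loss a \<sigma> \<omega> \<and> window_loss a \<sigma> \<omega> \<le> loss_bound \<sigma> \<omega>"
  let ?Y = "loss_bound \<sigma> \<omega>"
  have "\<bar>high_snr_term a \<sigma> (snd (snd \<omega>))\<bar> \<le> (k - 3 - \<bar>I\<bar>) + \<bar>ln (snd (snd \<omega>))\<bar>"
    using high_snr_term_eq[OF a_pos _ sigma_pos] support by (simp add: k_def)
  moreover have "\<bar>ln (snd (snd \<omega>))\<bar> \<le> ?Y" by (simp add: loss_bound_def)
  moreover have "k - 3 \<le> (k - 3) * ?Y" using mult_left_mono[OF loss_bound_ge_1, of "k - 3"] by (simp add: k_def)
  moreover have "\<bar>window_loss a \<sigma> \<omega>\<bar> \<le> ?Y" using loss by simp
  moreover have "\<bar>info_rv a \<sigma> \<omega> - I\<bar> \<le> \<bar>high_snr_term a \<sigma> (snd (snd \<omega>))\<bar>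
      + \<bar>noise_term \<sigma> (fst (snd \<omega>))\<bar> + \<bar>window_loss a \<sigma> \<omega>\<bar> + \<bar>I\<bar>"
    unfolding window_loss_def by linarith
  ultimately have "\<bar>info_rv a \<sigma> \<omega> - I\<bar> \<le> (k - 3) * ?Y + 3 * ?Y"
    using abs_noise_term_le_loss_bound[of \<sigma> \<omega>] by linarith
  then show "\<bar>info_rv a \<sigma> \<omega> - I\<bar> \<le> k * ?Y" by (simp add: algebra_simps)
qed

lemma integrable_info_rv_abs_cube:
  defines "I \<equiv> \<integral>\<omega>. info_rv a \<sigma> \<omega> \<partial>M"
  shows "integrable M (\<lambda>\<omega>. \<bar>info_rv a \<sigma> \<omega> - I\<bar> ^ 3)"
proof -
  define k where "k = \<bar>ln a\<bar> + \<bar>ln (2*pi*\<sigma>\<^sup>2)\<bar>/2 + 1/2 + \<bar>I\<bar> + 3"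
  have AE: "AE \<omega> in M. norm (\<bar>info_rv a \<sigma> \<omega> - I\<bar> ^ 3) \<le> norm (k^3 * (27 * loss_dominator \<sigma> \<omega>))"
    using AE_abs_info_rv_sub_le[of I] unfolding k_def[symmetric]
  proof eventually_elim
    fix \<omega> assume "\<bar>info_rv a \<sigma> \<omega> - I\<bar> \<le> k * loss_bound \<sigma> \<omega>"
    then have "\<bar>info_rv a \<sigma> \<omega> - I\<bar> ^ 3 \<le> k^3 * loss_bound \<sigma> \<omega> ^ 3"
      by (metis abs_ge_zero power_mono power_mult_distrib)
    also have "\<dots> \<le> k^3 * (27 * loss_dominator \<sigma> \<omega>)"
      by (intro mult_left_mono loss_bound_power_le_dominator) (auto simp: k_def)
    finally show "norm (\<bar>info_rv a \<sigma> \<omega> - I\<bar> ^ 3) \<le> norm (k^3 * (27 * loss_dominator \<sigma> \<omega>))"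
      by simp
  qed
  show ?thesis
    by (rule Bochner_Integration.integrable_bound[OF _ _ AE])
      (use integrable_loss_dominator measurable_info_rv[OF a_pos] in simp_all)
qed

end

definition rate_exponent :: real where "rate_exponent = min 1 (2*\<alpha>')"

definition loss_const :: real where
  "loss_const = 4 + 27 * (361 + ln_moment4) / 2 + (5 + c/\<alpha>') / 2"

lemma rate_exponent: "0 < rate_exponent" "rate_exponent \<le> 1" "rate_exponent \<le> 2*\<alpha>'"
  using exponent_pos by (auto simp: rate_exponent_def)

lemma loss_const_nonneg: "0 \<le> loss_const"
  using coeff_pos exponent_pos ln_moment4_nonneg by (simp add: loss_const_def)

context
  fixes a \<sigma> t :: real
  assumes a_pos: "0 < a" and sigma_pos: "0 < \<sigma>" and sigma_le: "\<sigma> \<le> a"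
    and t4: "t^4 = \<sigma>/a" and t_pos: "0 < t" and t_le: "t \<le> 1/2" and t_delta: "t\<^sup>2 \<le> \<delta>"
begin

abbreviation rate :: real where "rate \<equiv> t powr (rate_exponent / 4)"

lemma rate_pos: "0 < rate"
  using t_pos by simp

lemma rate_le_1: "rate \<le> 1"
  using t_pos t_le rate_exponent by (intro powr_le1) auto

lemma
  shows integrable_bad_score: "integrable (M a \<sigma>) (bad_score a \<sigma> t)"
    and integral_bad_score: "integral\<^sup>L (M a \<sigma>) (bad_score a \<sigma> t) \<le> t\<^sup>2 + c/\<alpha>' * t powr (2*\<alpha>') + 4*t"
proof -
  note ctx = a_pos sigma_pos sigma_le
  interpret prob_space "M a \<sigma>" by (rule prob_space_M[OF ctx])
  define w where "w = 2*\<sigma>/t^3"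
  have "w / a = 2 * t^4 / t^3" by (simp add: w_def t4)
  also have "\<dots> = 2*t" using t_pos by (simp add: eval_nat_numeral)
  finally have w: "0 \<le> w" "w / a = 2*t" using sigma_pos t_pos by (simp_all add: w_def)
  have Z: "integrable (law_Z \<sigma>) (\<lambda>z. t\<^sup>2 * (z\<^sup>2 / \<sigma>\<^sup>2))" "(\<integral>z. t\<^sup>2 * (z\<^sup>2 / \<sigma>\<^sup>2) \<partial>law_Z \<sigma>) = t\<^sup>2"
    using law_Z_moment_2[OF sigma_pos] sigma_pos by auto
  have t2: "0 < t\<^sup>2" using t_pos by simp
  note H = integral_law_H_near_0[OF t2 t_delta]
  note L = integrable_law_X_near_left_edge[OF a_pos w(1)] integral_law_X_near_left_edge[OF a_pos w(1)]
  note R = integrable_law_X_near_right_edge[OF a_pos w(1)] integral_law_X_near_right_edge[OF a_pos w(1)]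
  note lifted = integrable_M_Z[OF ctx Z(1)] integral_M_Z[OF ctx Z(1)]
    integrable_M_H[OF ctx H(1)] integral_M_H[OF ctx H(1)]
    integrable_M_X[OF ctx L(1)] integral_M_X[OF ctx L(1)]
    integrable_M_X[OF ctx R(1)] integral_M_X[OF ctx R(1)]
  show "integrable (M a \<sigma>) (bad_score a \<sigma> t)"
    unfolding bad_score_def w_def[symmetric] using lifted by simp
  have "integral\<^sup>L (M a \<sigma>) (bad_score a \<sigma> t) = t\<^sup>2 + (\<integral>h. indicator {0<..<t\<^sup>2} h \<partial>law_H f)
      + (\<integral>x. indicator {..w} (x + a/2) \<partial>law_X a) + (\<integral>x. indicator {..w} (a/2 - x) \<partial>law_X a)"
    unfolding bad_score_def w_def[symmetric] using lifted Z(2) sigma_pos t_pos by simp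
  also have "\<dots> \<le> t\<^sup>2 + c / \<alpha>' * (t\<^sup>2) powr \<alpha>' + w/a + w/a"
    using H(2) L(2) R(2) by linarith
  also have "(t\<^sup>2) powr \<alpha>' = t powr (2*\<alpha>')"
  proof -
    have "t\<^sup>2 = t powr 2" using t_pos powr_realpow[of t 2] by simp
    then show ?thesis by (simp add: powr_powr)
  qed
  finally show "integral\<^sup>L (M a \<sigma>) (bad_score a \<sigma> t) \<le> t\<^sup>2 + c/\<alpha>' * t powr (2*\<alpha>') + 4*t"
    using w by simp
qed

lemma AE_window_loss_square_le:
  "AE \<omega> in M a \<sigma>. (window_loss a \<sigma> \<omega>)\<^sup>2
     \<le> 4*t^4 + rate\<^sup>2 * (27 * loss_dominator \<sigma> \<omega>) / 2 + bad_score a \<sigma> t \<omega> / (2 * rate\<^sup>2)"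
  using AE_joint_law_support[OF a_pos sigma_pos pdf] AE_window_loss[OF a_pos sigma_pos sigma_le]
proof eventually_elim
  fix \<omega> :: "real \<times> real \<times> real"
  assume support: "-a/2 < fst \<omega> \<and> fst \<omega> < a/2 \<and> 0 < snd (snd \<omega>)"
    and loss: "0 \<le> window_loss a \<sigma> \<omega> \<and> window_loss a \<sigma> \<omega> \<le> loss_bound \<sigma> \<omega>"
  obtain x z h where \<omega>: "\<omega> = (x, z, h)" by (cases \<omega>) auto
  have good: "bad_score a \<sigma> t \<omega> < 1 \<Longrightarrow> window_loss a \<sigma> \<omega> \<le> 2*t\<^sup>2"
    using window_loss_le_of_bad_score_lt_1[OF a_pos sigma_pos t_pos t_le] support by (simp add: \<omega>)
  have "0 < rate\<^sup>2" using rate_pos by simp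
  from square_le_split_bound[OF _ _ bad_score_nonneg this good] loss
  have "(window_loss a \<sigma> \<omega>)\<^sup>2 \<le> 4*t^4 + rate\<^sup>2 * loss_bound \<sigma> \<omega> ^ 4 / 2 + bad_score a \<sigma> t \<omega> / (2 * rate\<^sup>2)"
    by blast
  moreover have "rate\<^sup>2 * loss_bound \<sigma> \<omega> ^ 4 \<le> rate\<^sup>2 * (27 * loss_dominator \<sigma> \<omega>)"
    by (intro mult_left_mono loss_bound_power_le_dominator) simp_all
  ultimately show "(window_loss a \<sigma> \<omega>)\<^sup>2
      \<le> 4*t^4 + rate\<^sup>2 * (27 * loss_dominator \<sigma> \<omega>) / 2 + bad_score a \<sigma> t \<omega> / (2 * rate\<^sup>2)"
    by linarith
qed

lemma
  shows integrable_window_loss_square: "integrable (M a \<sigma>) (\<lambda>\<omega>. (window_loss a \<sigma> \<omega>)\<^sup>2)"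
    and integral_window_loss_square: "(\<integral>\<omega>. (window_loss a \<sigma> \<omega>)\<^sup>2 \<partial>M a \<sigma>) \<le> loss_const * rate\<^sup>2"
proof -
  note ctx = a_pos sigma_pos sigma_le
  interpret prob_space "M a \<sigma>" by (rule prob_space_M[OF ctx])
  note [measurable] = measurable_window_loss[OF ctx]
  define R where "R = (\<lambda>\<omega>. 4*t^4 + rate\<^sup>2 * (27 * loss_dominator \<sigma> \<omega>) / 2 + bad_score a \<sigma> t \<omega> / (2 * rate\<^sup>2))"
  have R: "integrable (M a \<sigma>) R"
    unfolding R_def using integrable_loss_dominator[OF ctx] integrable_bad_score by simp
  have AE: "AE \<omega> in M a \<sigma>. (window_loss a \<sigma> \<omega>)\<^sup>2 \<le> R \<omega>"
    unfolding R_def by (rule AE_window_loss_square_le)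
  show B2: "integrable (M a \<sigma>) (\<lambda>\<omega>. (window_loss a \<sigma> \<omega>)\<^sup>2)"
    by (rule Bochner_Integration.integrable_bound[OF R]) (use AE in \<open>auto elim: AE_mp\<close>)
  have "(\<integral>\<omega>. (window_loss a \<sigma> \<omega>)\<^sup>2 \<partial>M a \<sigma>) \<le> integral\<^sup>L (M a \<sigma>) R"
    by (rule integral_mono_AE[OF B2 R AE])
  also have "\<dots> = 4*t^4 + rate\<^sup>2 * 27 * (361 + ln_moment4) / 2 + integral\<^sup>L (M a \<sigma>) (bad_score a \<sigma> t) / (2 * rate\<^sup>2)"
    unfolding R_def using integrable_loss_dominator[OF ctx] integral_loss_dominator[OF ctx] integrable_bad_score
    by (simp add: prob_space)
  also have "\<dots> \<le> loss_const * rate\<^sup>2"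
  proof -
    have t1: "t \<le> 1" using t_le by simp
    have p: "t powr p \<le> rate^4" if "rate_exponent \<le> p" for p
      using rate_exponent t_pos t1 that by (intro powr_le_rate_power4) auto
    have "t powr 1 \<le> rate^4" "t powr 2 \<le> rate^4" "t powr (2*\<alpha>') \<le> rate^4"
      by (rule p, use rate_exponent in simp)+
    moreover have "t^4 \<le> t^2" using t_pos t1 by (intro power_decreasing) auto
    moreover have "rate^4 \<le> rate^2" using rate_pos rate_le_1 by (intro power_decreasing) auto
    ultimately have small: "t \<le> rate^4" "t\<^sup>2 \<le> rate^4" "t powr (2*\<alpha>') \<le> rate^4" "t^4 \<le> rate^2"
      using t_pos by (simp_all add: powr_realpow)
    have "integral\<^sup>L (M a \<sigma>) (bad_score a \<sigma> t) \<le> (5 + c/\<alpha>') * rate^4"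
      using integral_bad_score small mult_left_mono[OF small(3), of "c/\<alpha>'"] coeff_pos exponent_pos
      by (simp add: algebra_simps)
    then have "integral\<^sup>L (M a \<sigma>) (bad_score a \<sigma> t) / (2 * rate\<^sup>2) \<le> (5 + c/\<alpha>') / 2 * rate\<^sup>2"
      using rate_pos by (simp add: field_simps eval_nat_numeral)
    moreover have "loss_const * rate\<^sup>2
        = 4 * rate\<^sup>2 + rate\<^sup>2 * 27 * (361 + ln_moment4) / 2 + (5 + c/\<alpha>') / 2 * rate\<^sup>2"
      by (simp add: loss_const_def algebra_simps)
    ultimately show ?thesis using small(4) by linarith
  qed
  finally show "(\<integral>\<omega>. (window_loss a \<sigma> \<omega>)\<^sup>2 \<partial>M a \<sigma>) \<le> loss_const * rate\<^sup>2" .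
qed

lemma window_loss_mean_le:
  "(\<integral>\<omega>. window_loss a \<sigma> \<omega> \<partial>M a \<sigma>) \<le> (1 + loss_const) / 2 * rate"
proof -
  note ctx = a_pos sigma_pos sigma_le
  interpret prob_space "M a \<sigma>" by (rule prob_space_M[OF ctx])
  have B: "window_loss a \<sigma> \<omega> \<le> (rate + (window_loss a \<sigma> \<omega>)\<^sup>2 / rate) / 2" for \<omega>
    using abs_2_mult_le_weighted_squares[OF rate_pos, of 1 "window_loss a \<sigma> \<omega>"] by simp
  have "(\<integral>\<omega>. window_loss a \<sigma> \<omega> \<partial>M a \<sigma>) \<le> (\<integral>\<omega>. (rate + (window_loss a \<sigma> \<omega>)\<^sup>2 / rate) / 2 \<partial>M a \<sigma>)"
    using integrable_window_loss[OF ctx] integrable_window_loss_square B by (intro integral_mono) auto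
  also have "\<dots> = (rate + (\<integral>\<omega>. (window_loss a \<sigma> \<omega>)\<^sup>2 \<partial>M a \<sigma>) / rate) / 2"
    using integrable_window_loss_square by (simp add: prob_space)
  also have "\<dots> \<le> (rate + loss_const * rate\<^sup>2 / rate) / 2"
    using integral_window_loss_square rate_pos by (intro divide_right_mono add_left_mono) auto
  also have "\<dots> = (1 + loss_const) / 2 * rate"
    using rate_pos by (simp add: field_simps power2_eq_square)
  finally show ?thesis .
qed

lemma mean_estimate:
  "\<bar>(\<integral>\<omega>. info_rv a \<sigma> \<omega> \<partial>M a \<sigma>) - (\<integral>\<omega>. high_snr_term a \<sigma> (snd (snd \<omega>)) \<partial>M a \<sigma>)\<bar>
     \<le> (1 + loss_const) / 2 * rate"
  using integral_info_rv[OF a_pos sigma_pos sigma_le] integral_high_snr_term_M[OF a_pos sigma_pos sigma_le]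
    window_loss_mean_nonneg[OF a_pos sigma_pos sigma_le] window_loss_mean_le
  by simp

lemma centered_window_loss_second_moment:
  defines "V \<equiv> \<lambda>\<omega>. window_loss a \<sigma> \<omega> - (\<integral>\<omega>. window_loss a \<sigma> \<omega> \<partial>M a \<sigma>)"
  shows "integrable (M a \<sigma>) (\<lambda>\<omega>. (V \<omega>)\<^sup>2)" "(\<integral>\<omega>. (V \<omega>)\<^sup>2 \<partial>M a \<sigma>) \<le> loss_const * rate\<^sup>2"
proof -
  note ctx = a_pos sigma_pos sigma_le
  interpret prob_space "M a \<sigma>" by (rule prob_space_M[OF ctx])
  define EB where "EB = (\<integral>\<omega>. window_loss a \<sigma> \<omega> \<partial>M a \<sigma>)"
  have V2: "(V \<omega>)\<^sup>2 = (window_loss a \<sigma> \<omega>)\<^sup>2 - 2 * EB * window_loss a \<sigma> \<omega> + EB\<^sup>2" for \<omega>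
    by (simp add: V_def EB_def power2_eq_square algebra_simps)
  note B = integrable_window_loss[OF ctx] integrable_window_loss_square
  show "integrable (M a \<sigma>) (\<lambda>\<omega>. (V \<omega>)\<^sup>2)" unfolding V2 using B by simp
  have "(\<integral>\<omega>. (V \<omega>)\<^sup>2 \<partial>M a \<sigma>) = (\<integral>\<omega>. (window_loss a \<sigma> \<omega>)\<^sup>2 \<partial>M a \<sigma>) - EB\<^sup>2"
    unfolding V2 using B by (simp add: prob_space EB_def power2_eq_square)
  then show "(\<integral>\<omega>. (V \<omega>)\<^sup>2 \<partial>M a \<sigma>) \<le> loss_const * rate\<^sup>2"
    using integral_window_loss_square zero_le_power2[of EB] by linarith
qed

lemma
  defines "I \<equiv> \<integral>\<omega>. info_rv a \<sigma> \<omega> \<partial>M a \<sigma>"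
    and "g \<equiv> high_snr_term 1 \<sigma>"
  shows integrable_info_rv_variance: "integrable (M a \<sigma>) (\<lambda>\<omega>. (info_rv a \<sigma> \<omega> - I)\<^sup>2)"
    and variance_estimate: "\<bar>(\<integral>\<omega>. (info_rv a \<sigma> \<omega> - I)\<^sup>2 \<partial>M a \<sigma>)
        - (1/2 + (\<integral>h. (g h - integral\<^sup>L (law_H f) g)\<^sup>2 \<partial>law_H f))\<bar>
      \<le> (1/2 + ln_moment2 + 2 * loss_const) * rate"
proof -
  note ctx = a_pos sigma_pos sigma_le
  define U where "U \<omega> = noise_term \<sigma> (fst (snd \<omega>)) + (g (snd (snd \<omega>)) - integral\<^sup>L (law_H f) g)"
    for \<omega> :: "real \<times> real \<times> real"
  define V where "V \<omega> = window_loss a \<sigma> \<omega> - (\<integral>\<omega>. window_loss a \<sigma> \<omega> \<partial>M a \<sigma>)" for \<omega>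
  define VarG where "VarG = (\<integral>h. (g h - integral\<^sup>L (law_H f) g)\<^sup>2 \<partial>law_H f)"
  note [measurable] = measurable_window_loss[OF ctx] measurable_info_rv[OF a_pos]
  have [measurable]: "U \<in> borel_measurable (M a \<sigma>)"
    unfolding U_def g_def high_snr_term_def noise_term_def by measurable
  have U2: "integrable (M a \<sigma>) (\<lambda>\<omega>. (U \<omega>)\<^sup>2)" "(\<integral>\<omega>. (U \<omega>)\<^sup>2 \<partial>M a \<sigma>) = 1/2 + VarG"
    using integrable_independent_part_square[OF ctx] integral_independent_part_square[OF ctx]
    by (simp_all add: U_def VarG_def g_def)
  have V2: "integrable (M a \<sigma>) (\<lambda>\<omega>. (V \<omega>)\<^sup>2)" "(\<integral>\<omega>. (V \<omega>)\<^sup>2 \<partial>M a \<sigma>) \<le> loss_const * rate\<^sup>2"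
    using centered_window_loss_second_moment by (simp_all add: V_def)
  have split: "AE \<omega> in M a \<sigma>. info_rv a \<sigma> \<omega> - I = U \<omega> + V \<omega>"
    using AE_info_rv_centered_eq[OF ctx] by (simp add: I_def U_def V_def g_def)
  have "(1 + 1/rate) * (\<integral>\<omega>. (V \<omega>)\<^sup>2 \<partial>M a \<sigma>) \<le> (1 + 1/rate) * (loss_const * rate\<^sup>2)"
    using V2(2) rate_pos by (intro mult_left_mono) auto
  also have "\<dots> = loss_const * rate\<^sup>2 + loss_const * rate"
    using rate_pos by (simp add: field_simps power2_eq_square)
  also have "loss_const * rate\<^sup>2 \<le> loss_const * rate"
    using rate_pos rate_le_1 loss_const_nonneg by (intro mult_left_mono) (auto simp: power2_eq_square)
  finally have "(1 + 1/rate) * (\<integral>\<omega>. (V \<omega>)\<^sup>2 \<partial>M a \<sigma>) \<le> 2 * loss_const * rate"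
    by simp
  moreover have "rate * (\<integral>\<omega>. (U \<omega>)\<^sup>2 \<partial>M a \<sigma>) \<le> rate * (1/2 + ln_moment2)"
    using U2(2) variance_high_snr_term_le[OF sigma_pos] rate_pos
    by (intro mult_left_mono) (auto simp: VarG_def g_def)
  moreover have "(1/2 + ln_moment2 + 2 * loss_const) * rate = rate * (1/2 + ln_moment2) + 2 * loss_const * rate"
    by (simp add: algebra_simps)
  moreover note square_integral_perturbation[OF U2(1) V2(1) _ _ _ split rate_pos]
  ultimately show "integrable (M a \<sigma>) (\<lambda>\<omega>. (info_rv a \<sigma> \<omega> - I)\<^sup>2)"
    and "\<bar>(\<integral>\<omega>. (info_rv a \<sigma> \<omega> - I)\<^sup>2 \<partial>M a \<sigma>)
        - (1/2 + (\<integral>h. (g h - integral\<^sup>L (law_H f) g)\<^sup>2 \<partial>law_H f))\<bar>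
      \<le> (1/2 + ln_moment2 + 2 * loss_const) * rate"
    unfolding VarG_def[symmetric] U2(2)[symmetric] by (simp_all add: V_def)
qed

end

definition error_const :: real where "error_const = 1/2 + ln_moment2 + 2 * loss_const"

lemma scale_parameter:
  assumes a: "0 < a" and s: "0 < \<sigma>" and large: "max 16 (1/\<delta>\<^sup>2) \<le> a/\<sigma>"
  defines "t \<equiv> (\<sigma>/a) powr (1/4)"
  shows "\<sigma> \<le> a" "t^4 = \<sigma>/a" "0 < t" "t \<le> 1/2" "t\<^sup>2 \<le> \<delta>"
    and "t powr (rate_exponent/4) = (\<sigma>/a) powr (rate_exponent/16)"
proof -
  have \<rho>: "0 < \<sigma>/a" "\<sigma>/a \<le> 1/16" "\<sigma>/a \<le> \<delta>\<^sup>2"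
    using a s large delta_pos by (auto simp: field_simps)
  show "\<sigma> \<le> a" using \<rho>(2) a by (simp add: field_simps)
  show t4: "t^4 = \<sigma>/a"
    using powr_power[of "\<sigma>/a" "1/4" 4] a s by (simp add: t_def)
  show t: "0 < t" using a s by (simp add: t_def)
  have "t^4 \<le> (1/2)^4" using t4 \<rho>(2) by (simp add: power_divide)
  then show "t \<le> 1/2" using power_mono_iff[of t "1/2" 4] t by simp
  have "(t\<^sup>2)\<^sup>2 \<le> \<delta>\<^sup>2" using t4 \<rho>(3) by simp
  then show "t\<^sup>2 \<le> \<delta>" using power_mono_iff[of "t\<^sup>2" \<delta> 2] delta_pos by simp
  show "t powr (rate_exponent/4) = (\<sigma>/a) powr (rate_exponent/16)"
    unfolding t_def by (simp add: powr_powr)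
qed

lemma information_density_estimates:
  assumes a: "0 < a" and s: "0 < \<sigma>" and large: "max 16 (1/\<delta>\<^sup>2) \<le> a/\<sigma>"
  defines "I \<equiv> \<integral>\<omega>. info_rv a \<sigma> \<omega> \<partial>M a \<sigma>" and "g \<equiv> high_snr_term 1 \<sigma>"
    and "\<epsilon> \<equiv> (\<sigma>/a) powr (rate_exponent/16)"
  shows "integrable (M a \<sigma>) (info_rv a \<sigma>)"
    and "integrable (M a \<sigma>) (\<lambda>\<omega>. high_snr_term a \<sigma> (snd (snd \<omega>)))"
    and "\<bar>I - (\<integral>\<omega>. high_snr_term a \<sigma> (snd (snd \<omega>)) \<partial>M a \<sigma>)\<bar> \<le> error_const * \<epsilon>"
    and "integrable (M a \<sigma>) (\<lambda>\<omega>. (info_rv a \<sigma> \<omega> - I)\<^sup>2)"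
    and "integrable (law_H f) (\<lambda>h. (g h - integral\<^sup>L (law_H f) g)\<^sup>2)"
    and "\<bar>(\<integral>\<omega>. (info_rv a \<sigma> \<omega> - I)\<^sup>2 \<partial>M a \<sigma>) - (1/2 + (\<integral>h. (g h - integral\<^sup>L (law_H f) g)\<^sup>2 \<partial>law_H f))\<bar>
      \<le> error_const * (\<sigma>/a) powr (rate_exponent/16/2)"
    and "integrable (M a \<sigma>) (\<lambda>\<omega>. \<bar>info_rv a \<sigma> \<omega> - I\<bar> ^ 3)"
proof -
  note t = scale_parameter[OF a s large]
  note ctx = a s t(1-5)
  have "(1 + loss_const) / 2 * \<epsilon> \<le> error_const * \<epsilon>"
    using loss_const_nonneg ln_moment2_nonneg by (intro mult_right_mono) (auto simp: error_const_def \<epsilon>_def)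
  then show "\<bar>I - (\<integral>\<omega>. high_snr_term a \<sigma> (snd (snd \<omega>)) \<partial>M a \<sigma>)\<bar> \<le> error_const * \<epsilon>"
    using mean_estimate[OF ctx] t(6) by (simp add: I_def \<epsilon>_def)
  have "(\<sigma>/a) powr (rate_exponent/16) \<le> (\<sigma>/a) powr (rate_exponent/16/2)"
    using t(1) a s rate_exponent by (intro powr_mono') auto
  then have "error_const * \<epsilon> \<le> error_const * (\<sigma>/a) powr (rate_exponent/16/2)"
    using loss_const_nonneg ln_moment2_nonneg by (intro mult_left_mono) (auto simp: error_const_def \<epsilon>_def)
  then show "\<bar>(\<integral>\<omega>. (info_rv a \<sigma> \<omega> - I)\<^sup>2 \<partial>M a \<sigma>) - (1/2 + (\<integral>h. (g h - integral\<^sup>L (law_H f) g)\<^sup>2 \<partial>law_H f))\<bar>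
      \<le> error_const * (\<sigma>/a) powr (rate_exponent/16/2)"
    using variance_estimate[OF ctx] t(6) by (simp add: I_def g_def \<epsilon>_def error_const_def)
  show "integrable (M a \<sigma>) (info_rv a \<sigma>)"
    and "integrable (M a \<sigma>) (\<lambda>\<omega>. high_snr_term a \<sigma> (snd (snd \<omega>)))"
    and "integrable (M a \<sigma>) (\<lambda>\<omega>. (info_rv a \<sigma> \<omega> - I)\<^sup>2)"
    and "integrable (M a \<sigma>) (\<lambda>\<omega>. \<bar>info_rv a \<sigma> \<omega> - I\<bar> ^ 3)"
    using integrable_info_rv[OF a s t(1)] integrable_high_snr_term_M[OF a s t(1)]
      integrable_info_rv_variance[OF ctx] integrable_info_rv_abs_cube[OF a s t(1)]
    by (simp_all add: I_def)
  show "integrable (law_H f) (\<lambda>h. (g h - integral\<^sup>L (law_H f) g)\<^sup>2)"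
    unfolding g_def by (rule integrable_variance_high_snr_term[OF s])
qed

end

lemma regular_fading_model:
  assumes "regular_fading f" "integrable (law_H f) (\<lambda>h. h\<^sup>2)"
  obtains \<alpha>' c \<delta> where "fading_model f \<alpha>' c \<delta>"
  using assms unfolding regular_fading_def fading_model_def by metis

theorem lemma4p6:
  fixes f :: "real \<Rightarrow> real"
  assumes reg: "regular_fading f"
    and second_moment: "integrable (law_H f) (\<lambda>h. h\<^sup>2)" "(\<integral>h. h\<^sup>2 \<partial>law_H f) = 1"
  shows "\<exists>\<alpha>::real. 0 < \<alpha> \<and> \<alpha> \<le> 1 \<and> (\<exists>C R::real. \<forall>a \<sigma>::real. 0 < a \<longrightarrow> 0 < \<sigma> \<longrightarrow> R \<le> a / \<sigma> \<longrightarrow>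
     (let M = joint_law a \<sigma> f;
          i = info_rv a \<sigma>;
          I = (\<integral>\<omega>. i \<omega> \<partial>M);
          g = (\<lambda>h. ln (h\<^sup>2 / (2 * pi * exp 1 * \<sigma>\<^sup>2)) / 2)
      in integrable M i
       \<and> integrable M (\<lambda>\<omega>. (\<lambda>(x, z, h). ln (a\<^sup>2 * h\<^sup>2 / (2 * pi * exp 1 * \<sigma>\<^sup>2)) / 2) \<omega>)
       \<and> \<bar>I - (\<integral>\<omega>. (\<lambda>(x, z, h). ln (a\<^sup>2 * h\<^sup>2 / (2 * pi * exp 1 * \<sigma>\<^sup>2)) / 2) \<omega> \<partial>M)\<bar>
            \<le> C * (\<sigma> / a) powr \<alpha>
       \<and> integrable M (\<lambda>\<omega>. (i \<omega> - I)\<^sup>2)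
       \<and> integrable (law_H f) (\<lambda>h. (g h - (\<integral>h'. g h' \<partial>law_H f))\<^sup>2)
       \<and> \<bar>(\<integral>\<omega>. (i \<omega> - I)\<^sup>2 \<partial>M)
            - (1/2 + (\<integral>h. (g h - (\<integral>h'. g h' \<partial>law_H f))\<^sup>2 \<partial>law_H f))\<bar>
            \<le> C * (\<sigma> / a) powr (\<alpha> / 2)
       \<and> integrable M (\<lambda>\<omega>. \<bar>i \<omega> - I\<bar> ^ 3)))"
proof -
  obtain \<alpha>' c \<delta> where "fading_model f \<alpha>' c \<delta>"
    using regular_fading_model[OF reg second_moment(1)] .
  then interpret fading_model f \<alpha>' c \<delta> .
  have T: "(\<lambda>\<omega>. (\<lambda>(x, z, h). ln (a\<^sup>2 * h\<^sup>2 / (2 * pi * exp 1 * \<sigma>\<^sup>2)) / 2) \<omega>)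
      = (\<lambda>\<omega>. high_snr_term a \<sigma> (snd (snd \<omega>)))" for a \<sigma> :: real
    by (auto simp: high_snr_term_def)
  have g: "(\<lambda>h. ln (h\<^sup>2 / (2 * pi * exp 1 * \<sigma>\<^sup>2)) / 2) = high_snr_term 1 \<sigma>" for \<sigma> :: real
    by (simp add: high_snr_term_def fun_eq_iff)
  show ?thesis
    unfolding Let_def T g
    using information_density_estimates rate_exponent
    by (intro exI[of _ "rate_exponent/16"] conjI exI[of _ error_const] exI[of _ "max 16 (1/\<delta>\<^sup>2)"] allI impI)
      auto
qed
end
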